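(* Let $\alpha>1$, $0<\beta<\infty$, $u\in H(\mathbb{D})$ and $\varphi\in S(\mathbb{D})$. Then $uC_\varphi$ maps $\mathcal{B}^\alpha$ boundedly into $\mathcal{Z}_\beta$ if and only if the following three conditions hold: $$\sup_{z\in\mathbb{D}}\frac{(1-|z|^2)^\beta|2u'(z)\varphi'(z)+u(z)\varphi''(z)|}{(1-|\varphi(z)|^2)^\alpha}\asymp\sup_{n\ge0}(n+1)^\alpha\|(2u'\varphi'+u\varphi'')\varphi^n\|_{\nu_\beta}<\infty,$$ $$\sup_{z\in\mathbb{D}}\frac{(1-|z|^2)^\beta|u(z)\varphi'(z)^2|}{(1-|\varphi(z)|^2)^{\alpha+1}}\asymp\sup_{n\ge0}(n+1)^{\alpha+1}\|u(\varphi')^2\varphi^n\|_{\nu_\beta}<\infty,$$ $$\sup_{n\ge0}(n+1)^{\alpha-1}\|u''\varphi^n\|_{\nu_\beta}\asymp\sup_{z\in\mathbb{D}}\frac{(1-|z|^2)^\beta|u''(z)|}{(1-|\varphi(z)|^2)^{\alpha-1}}<\infty.$$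
   Context: $\mathbb{D}$ is the open unit disk in $\mathbb{C}$, $H(\mathbb{D})$ the space of holomorphic functions on $\mathbb{D}$, and $S(\mathbb{D})$ the set of holomorphic self-maps of $\mathbb{D}$. For $u\in H(\mathbb{D})$, $\varphi\in S(\mathbb{D})$, the weighted composition operator is $uC_\varphi f(z)=u(z)f(\varphi(z))$. For $\alpha>0$, the Bloch type space $\mathcal{B}^\alpha$ consists of $f\in H(\mathbb{D})$ with $\sup_{z}(1-|z|^2)^\alpha|f'(z)|<\infty$, normed by $|f(0)|+\sup_{z}(1-|z|^2)^\alpha|f'(z)|$. For $\beta>0$, the Zygmund type space $\mathcal{Z}_\beta$ consists of $f\in H(\mathbb{D})$ with $\sup_z(1-|z|^2)^\beta|f''(z)|<\infty$, normed by $\|f\|_{\mathcal{Z}_\beta}=|f(0)|+|f'(0)|+\sup_z(1-|z|^2)^\beta|f''(z)|$. For a holomorphic $g$ on $\mathbb{D}$, $\|g\|_{\nu_\beta}=\sup_{z\in\mathbb{D}}(1-|z|^2)^\beta|g(z)|$; $\varphi^n$ is the $n$-th power of $\varphi$. $A\asymp B$ means $B/C\le A\le CB$ for a positive constant $C$ (independent of $u,\varphi$). *)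

theory Defs
  imports "HOL-Analysis.Analysis"
begin

definition disc :: "complex set" where "disc = ball 0 1"

definition self_map :: "(complex \<Rightarrow> complex) \<Rightarrow> bool" where
  "self_map \<phi> \<longleftrightarrow> \<phi> holomorphic_on disc \<and> \<phi> ` disc \<subseteq> disc"

definition bloch_seminorm :: "real \<Rightarrow> (complex \<Rightarrow> complex) \<Rightarrow> ereal" where
  "bloch_seminorm \<alpha> f = (SUP z\<in>disc. ereal ((1 - (cmod z)^2) powr \<alpha> * cmod (deriv f z)))"

definition bloch_space :: "real \<Rightarrow> (complex \<Rightarrow> complex) set" where
  "bloch_space \<alpha> = {f. f holomorphic_on disc \<and> bloch_seminorm \<alpha> f < \<infinity>}"

definition bloch_norm :: "real \<Rightarrow> (complex \<Rightarrow> complex) \<Rightarrow> ereal" where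
  "bloch_norm \<alpha> f = ereal (cmod (f 0)) + bloch_seminorm \<alpha> f"

definition zyg_seminorm :: "real \<Rightarrow> (complex \<Rightarrow> complex) \<Rightarrow> ereal" where
  "zyg_seminorm \<beta> f = (SUP z\<in>disc. ereal ((1 - (cmod z)^2) powr \<beta> * cmod (deriv (deriv f) z)))"

definition zygmund_space :: "real \<Rightarrow> (complex \<Rightarrow> complex) set" where
  "zygmund_space \<beta> = {f. f holomorphic_on disc \<and> zyg_seminorm \<beta> f < \<infinity>}"

definition zyg_norm :: "real \<Rightarrow> (complex \<Rightarrow> complex) \<Rightarrow> ereal" where
  "zyg_norm \<beta> f = ereal (cmod (f 0)) + ereal (cmod (deriv f 0)) + zyg_seminorm \<beta> f"

definition nu_norm :: "real \<Rightarrow> (complex \<Rightarrow> complex) \<Rightarrow> ereal" where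
  "nu_norm \<beta> g = (SUP z\<in>disc. ereal ((1 - (cmod z)^2) powr \<beta> * cmod (g z)))"

definition wco :: "(complex \<Rightarrow> complex) \<Rightarrow> (complex \<Rightarrow> complex) \<Rightarrow> (complex \<Rightarrow> complex) \<Rightarrow> (complex \<Rightarrow> complex)" where
  "wco u \<phi> f = (\<lambda>z. u z * f (\<phi> z))"

definition bounded_wco_bloch_zyg :: "real \<Rightarrow> real \<Rightarrow> (complex \<Rightarrow> complex) \<Rightarrow> (complex \<Rightarrow> complex) \<Rightarrow> bool" where
  "bounded_wco_bloch_zyg \<alpha> \<beta> u \<phi> \<longleftrightarrow>
     (\<exists>C::real. \<forall>f\<in>bloch_space \<alpha>. wco u \<phi> f \<in> zygmund_space \<beta> \<and>
                 zyg_norm \<beta> (wco u \<phi> f) \<le> ereal C * bloch_norm \<alpha> f)"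

definition W1 :: "(complex \<Rightarrow> complex) \<Rightarrow> (complex \<Rightarrow> complex) \<Rightarrow> complex \<Rightarrow> complex" where
  "W1 u \<phi> z = 2 * deriv u z * deriv \<phi> z + u z * deriv (deriv \<phi>) z"

definition W2 :: "(complex \<Rightarrow> complex) \<Rightarrow> (complex \<Rightarrow> complex) \<Rightarrow> complex \<Rightarrow> complex" where
  "W2 u \<phi> z = u z * (deriv \<phi> z)^2"

definition W3 :: "(complex \<Rightarrow> complex) \<Rightarrow> complex \<Rightarrow> complex" where
  "W3 u z = deriv (deriv u) z"

definition sup_ratio :: "real \<Rightarrow> real \<Rightarrow> (complex \<Rightarrow> complex) \<Rightarrow> (complex \<Rightarrow> complex) \<Rightarrow> ereal" where
  "sup_ratio \<beta> \<gamma> \<phi> w = (SUP z\<in>disc. ereal ((1 - (cmod z)^2) powr \<beta> * cmod (w z) / (1 - (cmod (\<phi> z))^2) powr \<gamma>))"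

definition sup_power :: "real \<Rightarrow> real \<Rightarrow> (complex \<Rightarrow> complex) \<Rightarrow> (complex \<Rightarrow> complex) \<Rightarrow> ereal" where
  "sup_power \<beta> \<gamma> \<phi> w = (SUP n::nat. ereal ((real n + 1) powr \<gamma>) * nu_norm \<beta> (\<lambda>z. w z * (\<phi> z)^n))"

end

theory Submission
  imports Defs "HOL-Complex_Analysis.Cauchy_Integral_Formula"
begin

text \<open>
  The second derivative of u \<cdot> (f \<circ> \<phi>) is u'' (f \<circ> \<phi>) + (2u'\<phi>' + u\<phi>'') (f' \<circ> \<phi>) + u \<phi>'^2 (f'' \<circ> \<phi>).
  For \<alpha> > 1 every f in the Bloch-type space satisfies |f(w)| \<le> C \<parallel>f\<parallel> (1 - |w|^2)^(1 - \<alpha>),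
  |f'(w)| \<le> \<parallel>f\<parallel> (1 - |w|^2)^(-\<alpha>) and, by Cauchy's estimate, |f''(w)| \<le> C \<parallel>f\<parallel> (1 - |w|^2)^(-\<alpha> - 1);
  hence finite ratio suprema make the operator bounded.

  Conversely, applying the operator to 1, z and z^2 bounds the three weights themselves, and applying
  it to combinations of the kernels (1 - cnj(a) w)^(-(\<alpha> - 1 + k)), k \<le> 2, with a = \<phi>(z), chosen so
  that at w = a only f, f' or f'' survives, bounds each weight by the matching power of
  1 - |\<phi>(z)|^2 where |\<phi>(z)| \<ge> 1/2; where |\<phi>(z)| < 1/2 the bounds from the polynomials suffice.

  Finally sup_n (n + 1)^\<gamma> x^n is comparable to (1 - x^2)^(-\<gamma>) uniformly in 0 \<le> x < 1, which makes
  every ratio supremum comparable to the corresponding power supremum.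
\<close>

section \<open>Powers against the weight \<open>1 - x\<^sup>2\<close>\<close>

lemma one_minus_sq_le_twice_one_minus:
  fixes x :: real
  assumes "0 \<le> x" and "x \<le> 1"
  shows "1 - x\<^sup>2 \<le> 2 * (1 - x)"
proof -
  have "1 - x\<^sup>2 = (1 - x) * (1 + x)" by (simp add: power2_eq_square algebra_simps)
  also have "\<dots> \<le> (1 - x) * 2" using assms by (intro mult_left_mono) auto
  finally show ?thesis by simp
qed

lemma powr_mult_power_le_max_powr:
  fixes x \<gamma> :: real
  assumes "\<gamma> > 0" and "0 \<le> x" and "x < 1"
  shows "((real n + 1) * (1 - x)) powr \<gamma> * x ^ n \<le> max \<gamma> 1 powr \<gamma>"
proof -
  define q where "q = max \<gamma> 1"
  define t where "t = 1 - x"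
  have q1: "q \<ge> 1" and "\<gamma> / q \<le> 1" unfolding q_def by auto
  have t0: "t > 0" and t1: "t \<le> 1" using assms unfolding t_def by auto
  have "(real n + 1) * t \<le> q * (1 + n * t / q)"
    using q1 t0 t1 by (simp add: algebra_simps)
  also have "\<dots> \<le> q * exp (n * t / q)"
    using q1 exp_ge_add_one_self[of "n * t / q"] by simp
  finally have "((real n + 1) * t) powr \<gamma> \<le> (q * exp (n * t / q)) powr \<gamma>"
    using t0 assms(1) by (intro powr_mono2) auto
  also have "\<dots> = q powr \<gamma> * exp ((\<gamma> / q) * (n * t))"
    using q1 by (simp add: powr_def ln_mult exp_add algebra_simps)
  also have "\<dots> \<le> q powr \<gamma> * exp (n * t)"
  proof -
    have "(\<gamma> / q) * (n * t) \<le> n * t"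
      using \<open>\<gamma> / q \<le> 1\<close> q1 t0 assms(1) by (intro mult_left_le_one_le) auto
    then show ?thesis by (intro mult_left_mono) auto
  qed
  finally have growth: "((real n + 1) * t) powr \<gamma> \<le> q powr \<gamma> * exp (n * t)" .
  have "x ^ n \<le> exp (x - 1) ^ n"
    using assms(2) exp_ge_add_one_self[of "x - 1"] by (intro power_mono) auto
  also have "\<dots> = exp (- (n * t))"
    unfolding t_def by (simp add: exp_of_nat_mult[symmetric] algebra_simps)
  finally have decay: "x ^ n \<le> exp (- (n * t))" .
  have "((real n + 1) * t) powr \<gamma> * x ^ n \<le> q powr \<gamma> * exp (n * t) * exp (- (n * t))"
    using growth decay assms(2) by (intro mult_mono) auto
  also have "\<dots> = q powr \<gamma>" by (simp add: exp_minus)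
  finally show ?thesis by (simp add: q_def t_def)
qed

lemma powr_mult_power_le_one_minus_sq_powr:
  fixes x \<gamma> :: real
  assumes "\<gamma> > 0" and "0 \<le> x" and "x < 1"
  shows "(real n + 1) powr \<gamma> * x ^ n \<le> (2 * max \<gamma> 1) powr \<gamma> * (1 - x\<^sup>2) powr (- \<gamma>)"
proof -
  define t where "t = 1 - x"
  have t0: "t > 0" using assms unfolding t_def by auto
  have "t powr \<gamma> * t powr (- \<gamma>) = 1" using t0 by (simp add: powr_minus)
  then have "(real n + 1) powr \<gamma> * x ^ n = ((real n + 1) * t) powr \<gamma> * x ^ n * t powr (- \<gamma>)"
    using t0 by (simp add: powr_mult)
  also have "\<dots> \<le> max \<gamma> 1 powr \<gamma> * t powr (- \<gamma>)"
    unfolding t_def using powr_mult_power_le_max_powr[OF assms] by (intro mult_right_mono) auto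
  also have "\<dots> = (2 * max \<gamma> 1) powr \<gamma> * (2 * t) powr (- \<gamma>)"
    using t0 by (simp add: powr_mult powr_minus field_simps)
  also have "\<dots> \<le> (2 * max \<gamma> 1) powr \<gamma> * (1 - x\<^sup>2) powr (- \<gamma>)"
    using one_minus_sq_le_twice_one_minus[of x] assms abs_square_less_1[of x]
    by (intro mult_left_mono powr_mono2') (auto simp: t_def)
  finally show ?thesis .
qed

lemma one_minus_sq_powr_le_powr_mult_power:
  fixes x \<gamma> :: real
  assumes "\<gamma> > 0" and "0 \<le> x" and "x < 1"
  obtains n :: nat where "(1 - x\<^sup>2) powr (- \<gamma>) \<le> 2 powr (\<gamma> + 1) * ((real n + 1) powr \<gamma> * x ^ n)"
proof
  define t where "t = 1 - x"
  have t0: "t > 0" and t1: "t \<le> 1" using assms unfolding t_def by auto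
  \<comment> \<open>\<open>n \<approx> 1/(2t)\<close> balances the two factors: \<open>(n+1) t \<ge> 1/2\<close> and \<open>x^n \<ge> 1 - n t \<ge> 1/2\<close>.\<close>
  define n where "n = nat \<lfloor>1 / (2 * t)\<rfloor>"
  have "real n = of_int \<lfloor>1 / (2 * t)\<rfloor>" unfolding n_def using t0 by simp
  then have n1: "real n \<le> 1 / (2 * t)" and n2: "1 / (2 * t) < real n + 1"
    using floor_correct[of "1 / (2 * t)"] by linarith+
  have "1 + real n * (- t) \<le> (1 + (- t)) ^ n" using t1 by (intro Bernoulli_inequality) auto
  moreover have "real n * t \<le> 1 / 2" using n1 t0 by (simp add: field_simps)
  ultimately have xn: "x ^ n \<ge> 1 / 2" unfolding t_def by (simp add: algebra_simps)
  have "x * x \<le> x" using assms mult_left_le_one_le[of x x] by simp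
  then have "t \<le> 1 - x\<^sup>2" unfolding t_def by (simp add: power2_eq_square)
  then have "(1 - x\<^sup>2) powr (- \<gamma>) \<le> t powr (- \<gamma>)"
    using t0 assms(1) by (intro powr_mono2') auto
  also have "\<dots> = 2 powr \<gamma> * (1 / (2 * t)) powr \<gamma>"
    using t0 by (simp add: powr_minus powr_mult powr_divide field_simps)
  also have "\<dots> \<le> 2 powr \<gamma> * (real n + 1) powr \<gamma>"
    using n2 t0 assms(1) by (intro mult_left_mono powr_mono2) auto
  also have "\<dots> = 2 powr (\<gamma> + 1) * ((real n + 1) powr \<gamma> * (1 / 2))"
    by (simp add: powr_add)
  also have "\<dots> \<le> 2 powr (\<gamma> + 1) * ((real n + 1) powr \<gamma> * x ^ n)"
    using xn by (intro mult_left_mono) auto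
  finally show "(1 - x\<^sup>2) powr (- \<gamma>) \<le> 2 powr (\<gamma> + 1) * ((real n + 1) powr \<gamma> * x ^ n)" .
qed

section \<open>Ratio suprema versus power suprema\<close>

lemma mem_disc_iff: "z \<in> disc \<longleftrightarrow> cmod z < 1"
  by (simp add: disc_def)

lemma zero_in_disc [simp]: "0 \<in> disc"
  by (simp add: disc_def)

lemma open_disc: "open disc"
  by (simp add: disc_def)

lemma one_minus_sq_norm_pos: "z \<in> disc \<Longrightarrow> 0 < 1 - (cmod z)\<^sup>2"
  by (simp add: mem_disc_iff abs_square_less_1)

lemma sup_ratio_nonneg: "sup_ratio \<beta> \<gamma> \<phi> w \<ge> 0"
  unfolding sup_ratio_def by (rule SUP_upper2[OF zero_in_disc]) simp

lemma sup_power_nonneg: "sup_power \<beta> \<gamma> \<phi> w \<ge> 0"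
proof -
  have "nu_norm \<beta> (\<lambda>z. w z * \<phi> z ^ 0) \<ge> 0"
    unfolding nu_norm_def by (rule SUP_upper2[OF zero_in_disc]) simp
  then show ?thesis unfolding sup_power_def by (intro SUP_upper2[of 0]) auto
qed

lemma sup_ratio_le_sup_power:
  assumes "\<gamma> > 0" and "\<phi> ` disc \<subseteq> disc"
  shows "sup_ratio \<beta> \<gamma> \<phi> w \<le> ereal (2 powr (\<gamma> + 1)) * sup_power \<beta> \<gamma> \<phi> w"
  unfolding sup_ratio_def
proof (rule SUP_least)
  fix z assume z: "z \<in> disc"
  define x where "x = cmod (\<phi> z)"
  define B where "B = (1 - (cmod z)\<^sup>2) powr \<beta> * cmod (w z)"
  have "\<phi> z \<in> disc" using assms(2) z by blast
  then have "0 \<le> x" "x < 1" by (auto simp: x_def mem_disc_iff)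
  then obtain n where n: "(1 - x\<^sup>2) powr (- \<gamma>) \<le> 2 powr (\<gamma> + 1) * ((real n + 1) powr \<gamma> * x ^ n)"
    using one_minus_sq_powr_le_powr_mult_power[OF assms(1)] by blast
  have "B / (1 - x\<^sup>2) powr \<gamma> = B * (1 - x\<^sup>2) powr (- \<gamma>)"
    by (simp add: powr_minus divide_inverse)
  also have "\<dots> \<le> B * (2 powr (\<gamma> + 1) * ((real n + 1) powr \<gamma> * x ^ n))"
    using n by (rule mult_left_mono) (simp add: B_def)
  also have "\<dots> = 2 powr (\<gamma> + 1) * ((real n + 1) powr \<gamma>
                    * ((1 - (cmod z)\<^sup>2) powr \<beta> * cmod (w z * \<phi> z ^ n)))"
    by (simp add: B_def x_def norm_mult norm_power)
  finally have "ereal (B / (1 - x\<^sup>2) powr \<gamma>) \<le> ereal (2 powr (\<gamma> + 1))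
      * (ereal ((real n + 1) powr \<gamma>) * ereal ((1 - (cmod z)\<^sup>2) powr \<beta> * cmod (w z * \<phi> z ^ n)))"
    by simp
  also have "\<dots> \<le> ereal (2 powr (\<gamma> + 1)) * (ereal ((real n + 1) powr \<gamma>) * nu_norm \<beta> (\<lambda>z. w z * \<phi> z ^ n))"
    unfolding nu_norm_def
    by (intro ereal_mult_left_mono SUP_upper2[OF z]) auto
  also have "\<dots> \<le> ereal (2 powr (\<gamma> + 1)) * sup_power \<beta> \<gamma> \<phi> w"
    unfolding sup_power_def by (intro ereal_mult_left_mono SUP_upper2[of n]) auto
  finally show "ereal ((1 - (cmod z)\<^sup>2) powr \<beta> * cmod (w z) / (1 - (cmod (\<phi> z))\<^sup>2) powr \<gamma>)
      \<le> ereal (2 powr (\<gamma> + 1)) * sup_power \<beta> \<gamma> \<phi> w"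
    by (simp add: B_def x_def)
qed

lemma sup_power_le_sup_ratio:
  assumes "\<gamma> > 0" and "\<phi> ` disc \<subseteq> disc"
  shows "sup_power \<beta> \<gamma> \<phi> w \<le> ereal ((2 * max \<gamma> 1) powr \<gamma>) * sup_ratio \<beta> \<gamma> \<phi> w"
  unfolding sup_power_def
proof (rule SUP_least)
  fix n :: nat
  define K where "K = (2 * max \<gamma> 1) powr \<gamma>"
  have "ereal ((real n + 1) powr \<gamma>) * nu_norm \<beta> (\<lambda>z. w z * \<phi> z ^ n) =
      (SUP z\<in>disc. ereal ((real n + 1) powr \<gamma>) * ereal ((1 - (cmod z)\<^sup>2) powr \<beta> * cmod (w z * \<phi> z ^ n)))"
    unfolding nu_norm_def by (rule SUP_ereal_mult_left[symmetric]) (use zero_in_disc in blast, simp, simp)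
  also have "\<dots> \<le> ereal K * sup_ratio \<beta> \<gamma> \<phi> w"
  proof (rule SUP_least)
    fix z assume z: "z \<in> disc"
    define x where "x = cmod (\<phi> z)"
    define B where "B = (1 - (cmod z)\<^sup>2) powr \<beta> * cmod (w z)"
    have "\<phi> z \<in> disc" using assms(2) z by blast
  then have "0 \<le> x" "x < 1" by (auto simp: x_def mem_disc_iff)
    have "(real n + 1) powr \<gamma> * ((1 - (cmod z)\<^sup>2) powr \<beta> * cmod (w z * \<phi> z ^ n))
        = B * ((real n + 1) powr \<gamma> * x ^ n)"
      by (simp add: B_def x_def norm_mult norm_power)
    also have "\<dots> \<le> B * (K * (1 - x\<^sup>2) powr (- \<gamma>))"
      unfolding K_def using powr_mult_power_le_one_minus_sq_powr[OF assms(1) \<open>0 \<le> x\<close> \<open>x < 1\<close>]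
      by (rule mult_left_mono) (simp add: B_def)
    also have "\<dots> = K * (B / (1 - x\<^sup>2) powr \<gamma>)"
      by (simp add: powr_minus divide_inverse)
    finally have "ereal ((real n + 1) powr \<gamma>) * ereal ((1 - (cmod z)\<^sup>2) powr \<beta> * cmod (w z * \<phi> z ^ n))
        \<le> ereal K * ereal (B / (1 - x\<^sup>2) powr \<gamma>)"
      by simp
    also have "\<dots> \<le> ereal K * sup_ratio \<beta> \<gamma> \<phi> w"
      unfolding sup_ratio_def B_def x_def
      by (intro ereal_mult_left_mono SUP_upper2[OF z]) (auto simp: K_def)
    finally show "ereal ((real n + 1) powr \<gamma>) * ereal ((1 - (cmod z)\<^sup>2) powr \<beta> * cmod (w z * \<phi> z ^ n))
        \<le> ereal K * sup_ratio \<beta> \<gamma> \<phi> w" .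
  qed
  finally show "ereal ((real n + 1) powr \<gamma>) * nu_norm \<beta> (\<lambda>z. w z * \<phi> z ^ n)
      \<le> ereal ((2 * max \<gamma> 1) powr \<gamma>) * sup_ratio \<beta> \<gamma> \<phi> w"
    by (simp add: K_def)
qed

definition ratio_power_const :: "real \<Rightarrow> real" where
  "ratio_power_const \<gamma> = 2 powr (\<gamma> + 1) + (2 * max \<gamma> 1) powr \<gamma>"

lemma ratio_power_const_pos: "ratio_power_const \<gamma> > 0"
  unfolding ratio_power_const_def by (simp add: add_pos_nonneg)

lemma ereal_le_mult_const_mono:
  assumes "x \<le> ereal a * y" and "a \<le> C" and "y \<ge> 0"
  shows "x \<le> ereal C * y"
  using assms(1) ereal_mult_right_mono[of "ereal a" "ereal C" y] assms(2,3) by (simp add: order_trans)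

lemma sup_ratio_sup_power_comparable:
  assumes "\<gamma> > 0" and "\<phi> ` disc \<subseteq> disc" and "ratio_power_const \<gamma> \<le> C"
  shows "sup_ratio \<beta> \<gamma> \<phi> w \<le> ereal C * sup_power \<beta> \<gamma> \<phi> w"
    and "sup_power \<beta> \<gamma> \<phi> w \<le> ereal C * sup_ratio \<beta> \<gamma> \<phi> w"
proof -
  have "2 powr (\<gamma> + 1) \<le> C" and "(2 * max \<gamma> 1) powr \<gamma> \<le> C"
    using assms(3) unfolding ratio_power_const_def by (smt (verit) powr_ge_zero)+
  then show "sup_ratio \<beta> \<gamma> \<phi> w \<le> ereal C * sup_power \<beta> \<gamma> \<phi> w"
    and "sup_power \<beta> \<gamma> \<phi> w \<le> ereal C * sup_ratio \<beta> \<gamma> \<phi> w"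
    using ereal_le_mult_const_mono[OF sup_ratio_le_sup_power[OF assms(1,2)] _ sup_power_nonneg]
      ereal_le_mult_const_mono[OF sup_power_le_sup_ratio[OF assms(1,2)] _ sup_ratio_nonneg]
    by blast+
qed

lemma sup_power_finite_if_sup_ratio_finite:
  assumes "\<gamma> > 0" and "\<phi> ` disc \<subseteq> disc" and "sup_ratio \<beta> \<gamma> \<phi> w < \<infinity>"
  shows "sup_power \<beta> \<gamma> \<phi> w < \<infinity>"
proof -
  have "ereal ((2 * max \<gamma> 1) powr \<gamma>) * sup_ratio \<beta> \<gamma> \<phi> w < \<infinity>"
    using assms(3) sup_ratio_nonneg[of \<beta> \<gamma> \<phi> w] by (cases "sup_ratio \<beta> \<gamma> \<phi> w") auto
  then show ?thesis using sup_power_le_sup_ratio[OF assms(1,2)] by (rule le_less_trans[rotated])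
qed

section \<open>Derivatives of a weighted composition\<close>

lemma holomorphic_on_disc_derivI:
  "f holomorphic_on disc \<Longrightarrow> z \<in> disc \<Longrightarrow> (f has_field_derivative deriv f z) (at z)"
  by (rule holomorphic_derivI[OF _ open_disc])

lemma holomorphic_on_disc_deriv2I:
  "f holomorphic_on disc \<Longrightarrow> z \<in> disc \<Longrightarrow> (deriv f has_field_derivative deriv (deriv f) z) (at z)"
  by (rule holomorphic_derivI[OF holomorphic_deriv[OF _ open_disc] open_disc])

lemma deriv_deriv_eqI:
  assumes "open S" "y \<in> S"
    and "\<And>x. x \<in> S \<Longrightarrow> (f has_field_derivative f' x) (at x)"
    and "(f' has_field_derivative v) (at y)"
  shows "deriv (deriv f) y = v"
proof -
  have "eventually (\<lambda>x. deriv f x = f' x) (nhds y)"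
    using assms(1,2) by (intro eventually_nhds_in_open[THEN eventually_mono])
      (auto intro: DERIV_imp_deriv assms(3))
  then have "deriv (deriv f) y = deriv f' y" by (rule deriv_cong_ev) simp
  also have "\<dots> = v" using assms(4) by (rule DERIV_imp_deriv)
  finally show ?thesis .
qed

lemma self_map_mem_disc: "self_map \<phi> \<Longrightarrow> z \<in> disc \<Longrightarrow> \<phi> z \<in> disc"
  unfolding self_map_def by auto

lemma self_map_image_disc: "self_map \<phi> \<Longrightarrow> \<phi> ` disc \<subseteq> disc"
  unfolding self_map_def by auto

lemma holomorphic_on_wco:
  assumes "u holomorphic_on disc" and "f holomorphic_on disc" and "self_map \<phi>"
  shows "wco u \<phi> f holomorphic_on disc"
proof -
  have "(f \<circ> \<phi>) holomorphic_on disc"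
    using assms(2,3) unfolding self_map_def by (intro holomorphic_on_compose_gen) auto
  then show ?thesis unfolding wco_def using assms(1) by (auto intro!: holomorphic_on_mult simp: o_def)
qed

lemma norm_add3_le: "cmod (x + y + z) \<le> cmod x + cmod y + cmod z"
  by (metis add_mono norm_triangle_ineq order_refl order_trans)

context
  fixes u \<phi> f :: "complex \<Rightarrow> complex"
  assumes u: "u holomorphic_on disc" and f: "f holomorphic_on disc" and \<phi>: "self_map \<phi>"
begin

private lemma has_field_derivative_comp:
  assumes "z \<in> disc"
  shows "((\<lambda>z. f (\<phi> z)) has_field_derivative deriv f (\<phi> z) * deriv \<phi> z) (at z)"
    and "((\<lambda>z. deriv f (\<phi> z)) has_field_derivative deriv (deriv f) (\<phi> z) * deriv \<phi> z) (at z)"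
proof -
  have "\<phi> holomorphic_on disc" "\<phi> z \<in> disc" using \<phi> assms by (auto simp: self_map_def)
  then show "((\<lambda>z. f (\<phi> z)) has_field_derivative deriv f (\<phi> z) * deriv \<phi> z) (at z)"
    and "((\<lambda>z. deriv f (\<phi> z)) has_field_derivative deriv (deriv f) (\<phi> z) * deriv \<phi> z) (at z)"
    using DERIV_chain2[OF holomorphic_on_disc_derivI[OF f] holomorphic_on_disc_derivI, of \<phi> z]
      DERIV_chain2[OF holomorphic_on_disc_deriv2I[OF f] holomorphic_on_disc_derivI, of \<phi> z] assms
    by auto
qed

lemma has_field_derivative_wco:
  assumes "z \<in> disc"
  shows "(wco u \<phi> f has_field_derivative deriv u z * f (\<phi> z) + u z * (deriv f (\<phi> z) * deriv \<phi> z)) (at z)"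
  unfolding wco_def
  by (rule DERIV_mult[OF holomorphic_on_disc_derivI[OF u assms] has_field_derivative_comp(1)[OF assms],
        THEN DERIV_cong]) (simp add: algebra_simps)

lemma deriv_wco:
  "z \<in> disc \<Longrightarrow> deriv (wco u \<phi> f) z = deriv u z * f (\<phi> z) + u z * (deriv f (\<phi> z) * deriv \<phi> z)"
  by (rule DERIV_imp_deriv[OF has_field_derivative_wco])

lemma deriv_deriv_wco:
  assumes z: "z \<in> disc"
  shows "deriv (deriv (wco u \<phi> f)) z
    = W3 u z * f (\<phi> z) + W1 u \<phi> z * deriv f (\<phi> z) + W2 u \<phi> z * deriv (deriv f) (\<phi> z)"
proof -
  have \<phi>': "\<phi> holomorphic_on disc" using \<phi> by (simp add: self_map_def)
  note comp = has_field_derivative_comp[OF z]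
  have deriv_has_derivative: "((\<lambda>y. deriv u y * f (\<phi> y) + u y * (deriv f (\<phi> y) * deriv \<phi> y)) has_field_derivative
      deriv (deriv u) z * f (\<phi> z) + deriv u z * (deriv f (\<phi> z) * deriv \<phi> z)
      + (deriv u z * (deriv f (\<phi> z) * deriv \<phi> z)
         + u z * (deriv (deriv f) (\<phi> z) * deriv \<phi> z * deriv \<phi> z + deriv f (\<phi> z) * deriv (deriv \<phi>) z))) (at z)"
    using DERIV_add[OF DERIV_mult[OF holomorphic_on_disc_deriv2I[OF u z] comp(1)]
        DERIV_mult[OF holomorphic_on_disc_derivI[OF u z]
          DERIV_mult[OF comp(2) holomorphic_on_disc_deriv2I[OF \<phi>' z]]]]
    by (simp add: algebra_simps)
  have "deriv (deriv (wco u \<phi> f)) z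
      = deriv (deriv u) z * f (\<phi> z) + deriv u z * (deriv f (\<phi> z) * deriv \<phi> z)
      + (deriv u z * (deriv f (\<phi> z) * deriv \<phi> z)
         + u z * (deriv (deriv f) (\<phi> z) * deriv \<phi> z * deriv \<phi> z + deriv f (\<phi> z) * deriv (deriv \<phi>) z))"
    by (rule deriv_deriv_eqI[OF open_disc z has_field_derivative_wco deriv_has_derivative])
  then show ?thesis unfolding W1_def W2_def W3_def by (simp add: algebra_simps power2_eq_square)
qed

lemma norm_deriv_deriv_wco_le:
  assumes "z \<in> disc"
  shows "cmod (deriv (deriv (wco u \<phi> f)) z) \<le> cmod (W3 u z) * cmod (f (\<phi> z))
    + cmod (W1 u \<phi> z) * cmod (deriv f (\<phi> z)) + cmod (W2 u \<phi> z) * cmod (deriv (deriv f) (\<phi> z))"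
  unfolding deriv_deriv_wco[OF assms] norm_mult[symmetric] by (rule norm_add3_le)

end

section \<open>Test functions\<close>

definition test_kernel :: "real \<Rightarrow> complex \<Rightarrow> complex \<Rightarrow> complex" where
  "test_kernel s a w = (1 - cnj a * w) powr (- of_real s)"

lemma one_minus_cnj_mult_bounds:
  assumes "cmod a \<le> 1" and "cmod w < 1"
  shows "1 - cnj a * w \<notin> \<real>\<^sub>\<le>\<^sub>0"
    and "0 < 1 - cmod a * cmod w"
    and "1 - cmod a * cmod w \<le> cmod (1 - cnj a * w)"
proof -
  have n: "cmod (cnj a * w) < 1"
    using assms mult_left_le_one_le[of "cmod w" "cmod a"] by (simp add: norm_mult)
  then have "Re (1 - cnj a * w) > 0" using complex_Re_le_cmod[of "cnj a * w"] by simp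
  then show "1 - cnj a * w \<notin> \<real>\<^sub>\<le>\<^sub>0" by (auto simp: complex_nonpos_Reals_iff)
  show "0 < 1 - cmod a * cmod w" using n by (simp add: norm_mult)
  show "1 - cmod a * cmod w \<le> cmod (1 - cnj a * w)"
    using norm_triangle_ineq2[of 1 "cnj a * w"] by (simp add: norm_mult)
qed

lemma one_minus_sq_le_norm_one_minus_cnj_mult:
  assumes "cmod a \<le> 1" and "cmod w < 1"
  shows "1 - (cmod a)\<^sup>2 \<le> 2 * cmod (1 - cnj a * w)"
    and "1 - (cmod w)\<^sup>2 \<le> 2 * cmod (1 - cnj a * w)"
proof -
  have "1 - (cmod a)\<^sup>2 \<le> 2 * (1 - cmod a)" "1 - (cmod w)\<^sup>2 \<le> 2 * (1 - cmod w)"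
    using assms one_minus_sq_le_twice_one_minus[of "cmod a"] one_minus_sq_le_twice_one_minus[of "cmod w"]
    by auto
  moreover have "cmod a * cmod w \<le> cmod a" "cmod a * cmod w \<le> cmod w"
    using assms by (auto intro: mult_right_le_one_le mult_left_le_one_le)
  ultimately show "1 - (cmod a)\<^sup>2 \<le> 2 * cmod (1 - cnj a * w)"
    and "1 - (cmod w)\<^sup>2 \<le> 2 * cmod (1 - cnj a * w)"
    using one_minus_cnj_mult_bounds(3)[OF assms] assms by (smt (verit))+
qed

lemma has_field_derivative_test_kernel:
  assumes "cmod a \<le> 1" and "cmod w < 1"
  shows "(test_kernel s a has_field_derivative of_real s * cnj a * test_kernel (s + 1) a w) (at w)"
proof -
  have D: "(test_kernel s a has_field_derivative
      (- of_real s) * (1 - cnj a * w) powr (- of_real s - 1) * (- cnj a)) (at w)"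
    unfolding test_kernel_def[abs_def]
    by (rule DERIV_chain2[where f="\<lambda>z. z powr (- of_real s)" and g="\<lambda>w. 1 - cnj a * w",
          OF has_field_derivative_powr[OF one_minus_cnj_mult_bounds(1)[OF assms]]])
      (auto intro!: derivative_eq_intros)
  have ex: "- complex_of_real (s + 1) = - complex_of_real s - 1" by simp
  have E: "(- of_real s) * (1 - cnj a * w) powr (- of_real s - 1) * (- cnj a)
      = of_real s * cnj a * test_kernel (s + 1) a w"
    unfolding test_kernel_def ex by (simp add: algebra_simps)
  show ?thesis using D unfolding E .
qed

lemma norm_test_kernel: "cmod (test_kernel s a w) = cmod (1 - cnj a * w) powr (- s)"
  unfolding test_kernel_def by (simp add: norm_powr_real_powr')

lemma test_kernel_at_0 [simp]: "test_kernel s a 0 = 1"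
  unfolding test_kernel_def by simp

lemma test_kernel_real:
  assumes "cnj a * w = of_real x" and "x < 1"
  shows "test_kernel s a w = of_real ((1 - x) powr (- s))"
  unfolding test_kernel_def assms(1) using assms(2) by (simp add: powr_of_real[symmetric])

lemma powr_minus_divide_power:
  fixes A s :: real
  assumes "A > 0"
  shows "A powr (- s) / A ^ k = A powr (- (s + real k))"
proof -
  have "A powr (- (s + real k)) = A powr (- s) * A powr (- real k)"
    by (simp add: powr_add[symmetric])
  also have "A powr (- real k) = inverse (A ^ k)"
    using assms by (simp add: powr_minus powr_realpow)
  finally show ?thesis by (simp add: divide_inverse)
qed

lemma test_kernel_diagonal:
  assumes "cmod a < 1"
  shows "test_kernel (s + real k) a a = of_real ((1 - (cmod a)\<^sup>2) powr (- s) / (1 - (cmod a)\<^sup>2) ^ k)"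
proof -
  have pos: "0 < 1 - (cmod a)\<^sup>2" using assms by (simp add: abs_square_less_1)
  have "test_kernel (s + real k) a a = of_real ((1 - (cmod a)\<^sup>2) powr (- (s + real k)))"
  proof (rule test_kernel_real)
    show "cnj a * a = of_real ((cmod a)\<^sup>2)" using complex_norm_square[of a] by (simp add: mult.commute)
    show "(cmod a)\<^sup>2 < 1" using assms by (simp add: abs_square_less_1)
  qed
  also have "(1 - (cmod a)\<^sup>2) powr (- (s + real k)) = (1 - (cmod a)\<^sup>2) powr (- s) / (1 - (cmod a)\<^sup>2) ^ k"
    using powr_minus_divide_power[OF pos] by simp
  finally show ?thesis .
qed

lemma test_kernel_weighted_bound:
  assumes a: "cmod a < 1" and w: "cmod w < 1" and "s \<ge> 0"
  shows "(1 - (cmod a)\<^sup>2) ^ k * ((1 - (cmod w)\<^sup>2) powr s * cmod (test_kernel (s + k) a w)) \<le> 2 powr (s + k)"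
proof -
  define d where "d = cmod (1 - cnj a * w)"
  have d0: "d > 0"
    using one_minus_cnj_mult_bounds(2,3)[of a w] assms unfolding d_def by linarith
  have "(1 - (cmod a)\<^sup>2) ^ k \<le> (2 * d) ^ k"
    using one_minus_sq_le_norm_one_minus_cnj_mult(1)[of a w] a w
    by (intro power_mono) (auto simp: d_def abs_square_le_1 less_imp_le)
  moreover have "(1 - (cmod w)\<^sup>2) powr s \<le> (2 * d) powr s"
    using one_minus_sq_le_norm_one_minus_cnj_mult(2)[of a w] a w \<open>s \<ge> 0\<close>
    by (intro powr_mono2) (auto simp: d_def abs_square_le_1 less_imp_le)
  ultimately have "(1 - (cmod a)\<^sup>2) ^ k * ((1 - (cmod w)\<^sup>2) powr s * cmod (test_kernel (s + k) a w))
      \<le> (2 * d) ^ k * ((2 * d) powr s * d powr (- (s + k)))"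
    using a by (intro mult_mono) (auto simp: norm_test_kernel d_def abs_square_le_1 less_imp_le)
  also have "\<dots> = (2 * d) powr (s + k) * d powr (- (s + k))"
  proof -
    have "(2 * d) ^ k = (2 * d) powr real k" using d0 by (simp add: powr_realpow)
    then show ?thesis by (simp add: powr_add algebra_simps)
  qed
  also have "\<dots> = 2 powr (s + k) * (d powr (s + k) * d powr (- (s + k)))"
    using d0 by (simp add: powr_mult del: powr_realpow)
  also have "\<dots> = 2 powr (s + k)"
    using d0 by (simp add: powr_add[symmetric])
  finally show ?thesis .
qed

text \<open>\<open>test_fun_deriv j p c a\<close> is the \<open>j\<close>-th derivative of the test function
  \<open>w \<mapsto> \<Sum>k\<le>2. c k (1 - |a|\<^sup>2)\<^sup>k (1 - cnj a w) powr -(p + k)\<close>. The coefficients \<open>c\<close> are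
  chosen below so that at \<open>w = a\<close> exactly one of the function and its first two derivatives
  does not vanish.\<close>

definition test_fun_deriv :: "nat \<Rightarrow> real \<Rightarrow> (nat \<Rightarrow> real) \<Rightarrow> complex \<Rightarrow> complex \<Rightarrow> complex" where
  "test_fun_deriv j p c a w = (\<Sum>k\<le>2. of_real (c k * (1 - (cmod a)\<^sup>2) ^ k * pochhammer (p + k) j)
                                   * cnj a ^ j * test_kernel (p + k + j) a w)"

abbreviation test_fun :: "real \<Rightarrow> (nat \<Rightarrow> real) \<Rightarrow> complex \<Rightarrow> complex \<Rightarrow> complex" where
  "test_fun \<equiv> test_fun_deriv 0"

lemma has_field_derivative_test_fun_deriv:
  assumes "cmod a \<le> 1" and "cmod w < 1"
  shows "(test_fun_deriv j p c a has_field_derivative test_fun_deriv (Suc j) p c a w) (at w)"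
  unfolding test_fun_deriv_def[abs_def]
proof (rule DERIV_sum)
  fix k :: nat
  have "(test_kernel (p + real k + real j) a has_field_derivative
      of_real (p + real k + real j) * cnj a * test_kernel (p + real k + real (Suc j)) a w) (at w)"
    using has_field_derivative_test_kernel[OF assms, of "p + real k + real j"] by (simp add: ac_simps)
  then show "((\<lambda>w. of_real (c k * (1 - (cmod a)\<^sup>2) ^ k * pochhammer (p + real k) j) * cnj a ^ j
        * test_kernel (p + real k + real j) a w) has_field_derivative
      of_real (c k * (1 - (cmod a)\<^sup>2) ^ k * pochhammer (p + real k) (Suc j)) * cnj a ^ Suc j
        * test_kernel (p + real k + real (Suc j)) a w) (at w)"
    by (rule DERIV_cmult[THEN DERIV_cong]) (simp add: pochhammer_Suc algebra_simps)
qed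

lemma holomorphic_on_test_fun_deriv:
  "cmod a \<le> 1 \<Longrightarrow> test_fun_deriv j p c a holomorphic_on disc"
  unfolding holomorphic_on_open[OF open_disc]
  by (auto simp: mem_disc_iff intro!: exI[of _ "test_fun_deriv (Suc j) p c a _"]
      has_field_derivative_test_fun_deriv)

lemma deriv_test_fun:
  assumes "cmod a \<le> 1" and "w \<in> disc"
  shows "deriv (test_fun p c a) w = test_fun_deriv 1 p c a w"
    and "deriv (deriv (test_fun p c a)) w = test_fun_deriv 2 p c a w"
proof -
  have D: "(test_fun_deriv j p c a has_field_derivative test_fun_deriv (Suc j) p c a x) (at x)"
    if "x \<in> disc" for j x
    using that assms(1) by (intro has_field_derivative_test_fun_deriv) (auto simp: mem_disc_iff)
  show "deriv (test_fun p c a) w = test_fun_deriv 1 p c a w"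
    using D[OF assms(2)] by (simp add: DERIV_imp_deriv)
  show "deriv (deriv (test_fun p c a)) w = test_fun_deriv 2 p c a w"
    using deriv_deriv_eqI[OF open_disc assms(2) D D[OF assms(2)]] by (simp add: numeral_2_eq_2)
qed

lemma test_fun_deriv_diagonal:
  assumes "cmod a < 1"
  shows "test_fun_deriv j p c a a = cnj a ^ j
    * of_real ((\<Sum>k\<le>2. c k * pochhammer (p + k) j) * (1 - (cmod a)\<^sup>2) powr (- p) / (1 - (cmod a)\<^sup>2) ^ j)"
proof -
  define A where "A = 1 - (cmod a)\<^sup>2"
  have A0: "A > 0" using assms by (simp add: A_def abs_square_less_1)
  have "test_kernel (p + k + j) a a = of_real (A powr (- p) / A ^ (k + j))" for k
    using test_kernel_diagonal[OF assms, of p "k + j"] by (simp add: A_def add.assoc)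
  then have "test_fun_deriv j p c a a
      = (\<Sum>k\<le>2. cnj a ^ j * of_real (c k * pochhammer (p + k) j * A powr (- p) / A ^ j))"
    unfolding test_fun_deriv_def A_def[symmetric] using A0
    by (intro sum.cong) (simp_all add: power_add field_simps)
  also have "\<dots> = cnj a ^ j * of_real (\<Sum>k\<le>2. c k * pochhammer (p + k) j * A powr (- p) / A ^ j)"
    by (simp only: sum_distrib_left of_real_sum)
  also have "(\<Sum>k\<le>2. c k * pochhammer (p + k) j * A powr (- p) / A ^ j)
      = (\<Sum>k\<le>2. c k * pochhammer (p + k) j) * A powr (- p) / A ^ j"
    by (simp only: sum_divide_distrib sum_distrib_right)
  finally show ?thesis by (simp only: A_def)
qed

definition test_fun_bound :: "real \<Rightarrow> (nat \<Rightarrow> real) \<Rightarrow> real" where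
  "test_fun_bound p c = (\<Sum>k\<le>2. \<bar>c k\<bar>) + (\<Sum>k\<le>2. \<bar>c k\<bar> * (p + k) * 2 powr (p + 1 + k))"

lemma bloch_seminorm_test_fun_le:
  assumes "p \<ge> 0" and a: "cmod a < 1"
  shows "bloch_seminorm (p + 1) (test_fun p c a) \<le> ereal (\<Sum>k\<le>2. \<bar>c k\<bar> * (p + k) * 2 powr (p + 1 + k))"
  unfolding bloch_seminorm_def
proof (rule SUP_least)
  fix w assume w: "w \<in> disc"
  define W where "W = (1 - (cmod w)\<^sup>2) powr (p + 1)"
  define A where "A = 1 - (cmod a)\<^sup>2"
  have "A \<ge> 0" using a by (simp add: A_def abs_square_le_1 less_imp_le)
  have summand: "W * cmod (of_real (c k * A ^ k * pochhammer (p + real k) 1) * cnj a ^ 1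
        * test_kernel (p + real k + real 1) a w)
      \<le> \<bar>c k\<bar> * (p + k) * 2 powr (p + 1 + k)" for k
  proof -
    have "W * cmod (of_real (c k * A ^ k * pochhammer (p + real k) 1) * cnj a ^ 1
          * test_kernel (p + real k + real 1) a w)
        = (\<bar>c k\<bar> * (p + k)) * cmod a * (A ^ k * (W * cmod (test_kernel (p + 1 + real k) a w)))"
      using \<open>A \<ge> 0\<close> \<open>p \<ge> 0\<close>
      by (simp only: norm_mult norm_of_real norm_power complex_mod_cnj)
        (simp add: abs_mult ac_simps)
    also have "\<dots> \<le> (\<bar>c k\<bar> * (p + k)) * 1 * 2 powr (p + 1 + k)"
      using test_kernel_weighted_bound[OF a _, of w "p + 1" k] w a \<open>p \<ge> 0\<close> \<open>A \<ge> 0\<close>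
      by (intro mult_mono) (auto simp: A_def W_def mem_disc_iff)
    finally show ?thesis by simp
  qed
  have "W * cmod (deriv (test_fun p c a) w) = W * cmod (test_fun_deriv 1 p c a w)"
    using deriv_test_fun(1)[of a w] a w by simp
  also have "\<dots> \<le> (\<Sum>k\<le>2. W * cmod (of_real (c k * A ^ k * pochhammer (p + real k) 1) * cnj a ^ 1
        * test_kernel (p + real k + real 1) a w))"
    unfolding test_fun_deriv_def A_def[symmetric] sum_distrib_left[symmetric]
    by (intro mult_left_mono norm_sum) (simp add: W_def)
  also have "\<dots> \<le> (\<Sum>k\<le>2. \<bar>c k\<bar> * (p + k) * 2 powr (p + 1 + k))"
    by (intro sum_mono summand)
  finally show "ereal ((1 - (cmod w)\<^sup>2) powr (p + 1) * cmod (deriv (test_fun p c a) w))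
      \<le> ereal (\<Sum>k\<le>2. \<bar>c k\<bar> * (p + k) * 2 powr (p + 1 + k))"
    by (simp add: W_def)
qed

lemma norm_test_fun_at_0_le: "cmod a \<le> 1 \<Longrightarrow> cmod (test_fun p c a 0) \<le> (\<Sum>k\<le>2. \<bar>c k\<bar>)"
  unfolding test_fun_deriv_def
proof (rule order_trans[OF norm_sum sum_mono])
  fix k assume "cmod a \<le> 1"
  then have "(1 - (cmod a)\<^sup>2) ^ k \<le> 1" and "0 \<le> 1 - (cmod a)\<^sup>2"
    by (auto simp: abs_square_le_1 intro: power_le_one)
  moreover have "of_real (c k * (1 - (cmod a)\<^sup>2) ^ k * pochhammer (p + real k) 0) * cnj a ^ 0
      * test_kernel (p + real k + real 0) a 0 = complex_of_real (c k * (1 - (cmod a)\<^sup>2) ^ k)"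
    by simp
  ultimately show "cmod (of_real (c k * (1 - (cmod a)\<^sup>2) ^ k * pochhammer (p + real k) 0) * cnj a ^ 0
      * test_kernel (p + real k + real 0) a 0) \<le> \<bar>c k\<bar>"
    by (simp only: norm_of_real abs_mult) (simp add: mult_left_le)
qed

lemma test_fun_in_bloch_space:
  assumes "p \<ge> 0" and "cmod a < 1"
  shows "test_fun p c a \<in> bloch_space (p + 1)"
    and "bloch_norm (p + 1) (test_fun p c a) \<le> ereal (test_fun_bound p c)"
proof -
  note seminorm = bloch_seminorm_test_fun_le[OF assms, of c]
  show "test_fun p c a \<in> bloch_space (p + 1)"
    unfolding bloch_space_def using holomorphic_on_test_fun_deriv[of a] seminorm assms(2)
    by (auto intro: le_less_trans)
  show "bloch_norm (p + 1) (test_fun p c a) \<le> ereal (test_fun_bound p c)"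
    unfolding bloch_norm_def test_fun_bound_def plus_ereal.simps(1)[symmetric]
    using norm_test_fun_at_0_le[of a p c] assms(2) by (intro add_mono seminorm) auto
qed

section \<open>Growth of Bloch-type functions\<close>

lemma cnj_sgn_mult_self: "cnj (sgn w) * w = of_real (cmod w)"
proof (cases "w = 0")
  case False
  have "cnj w * w = of_real ((cmod w)\<^sup>2)"
    using complex_norm_square[of w] by (simp add: mult.commute)
  then show ?thesis using False
    by (simp add: complex_sgn_def scaleR_conv_of_real field_simps power2_eq_square)
qed simp

text \<open>An integral-free substitute for \<open>|f b - f a| \<le> \<integral>|f'|\<close>: apply the mean value theorem
  for real parts to \<open>e f - g\<close>, where \<open>e = cnj (sgn (f b - f a))\<close> rotates \<open>f b - f a\<close>
  onto the nonnegative reals.\<close>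

lemma norm_diff_le_by_majorant:
  assumes f: "\<And>u. u \<in> closed_segment a b \<Longrightarrow> (f has_field_derivative f' u) (at u)"
    and g: "\<And>u. u \<in> closed_segment a b \<Longrightarrow> (g has_field_derivative g' u) (at u)"
    and major: "\<And>u. u \<in> closed_segment a b \<Longrightarrow> cmod (f' u * (b - a)) \<le> Re (g' u * (b - a))"
  shows "cmod (f b - f a) \<le> Re (g b - g a)"
proof -
  define e where "e = cnj (sgn (f b - f a))"
  have e: "cmod e \<le> 1" by (simp add: e_def norm_sgn)
  have "((\<lambda>z. e * f z - g z) has_field_derivative e * f' u - g' u) (at u)"
    if "u \<in> closed_segment a b" for u
    using f[OF that] g[OF that] by (intro DERIV_diff DERIV_cmult)
  from complex_mvt_line[OF this] obtain u where u: "u \<in> closed_segment a b"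
    and mvt: "Re (e * f b - g b) - Re (e * f a - g a) = Re ((e * f' u - g' u) * (b - a))"
    by blast
  have "Re (e * (f' u * (b - a))) \<le> cmod (e * (f' u * (b - a)))" by (rule complex_Re_le_cmod)
  also have "\<dots> \<le> cmod (f' u * (b - a))"
    using e by (simp add: norm_mult mult_left_le_one_le)
  finally have "Re ((e * f' u - g' u) * (b - a)) \<le> 0"
    using major[OF u] by (simp add: algebra_simps)
  moreover have "e * (f b - f a) = of_real (cmod (f b - f a))"
    unfolding e_def by (rule cnj_sgn_mult_self)
  ultimately show ?thesis using mvt by (simp add: algebra_simps)
qed

lemma bloch_deriv_le_one_minus_norm_powr:
  assumes bound: "(1 - (cmod x)\<^sup>2) powr \<alpha> * cmod (deriv f x) \<le> s"
    and "\<alpha> \<ge> 0" and "x \<in> disc"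
  shows "cmod (deriv f x) \<le> s * (1 - cmod x) powr (- \<alpha>)"
proof -
  have x: "cmod x < 1" using \<open>x \<in> disc\<close> by (simp add: mem_disc_iff)
  then have "(cmod x)\<^sup>2 \<le> cmod x" by (simp add: power2_eq_square mult_left_le_one_le)
  then have "(1 - cmod x) powr \<alpha> * cmod (deriv f x) \<le> (1 - (cmod x)\<^sup>2) powr \<alpha> * cmod (deriv f x)"
    using x \<open>\<alpha> \<ge> 0\<close> by (intro mult_right_mono powr_mono2) auto
  also have "\<dots> \<le> s" by (rule bound)
  finally show ?thesis using x by (simp add: powr_minus field_simps)
qed

lemma bloch_increment_growth:
  assumes f: "f holomorphic_on disc"
    and bound: "\<And>x. x \<in> disc \<Longrightarrow> (1 - (cmod x)\<^sup>2) powr \<alpha> * cmod (deriv f x) \<le> s"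
    and "\<alpha> > 1" and "s \<ge> 0" and w: "w \<in> disc"
  shows "cmod (f w - f 0) \<le> s / (\<alpha> - 1) * (1 - cmod w) powr (1 - \<alpha>)"
proof -
  have w1: "cmod w < 1" using w by (simp add: mem_disc_iff)
  have seg: "closed_segment 0 w \<subseteq> disc"
    by (rule closed_segment_subset) (use w in \<open>auto simp: disc_def\<close>)
  define \<omega> where "\<omega> = sgn w"
  have \<omega>: "cmod \<omega> \<le> 1" by (simp add: \<omega>_def norm_sgn)
  \<comment> \<open>\<open>g\<close> is a primitive of the majorant \<open>s (1 - t|w|)\<^sup>-\<^sup>\<alpha>\<close> along the radius through \<open>w\<close>.\<close>
  define g where "g = (\<lambda>z. of_real (s / (\<alpha> - 1)) * test_kernel (\<alpha> - 1) \<omega> z)"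
  define g' where "g' = (\<lambda>z. of_real s * cnj \<omega> * test_kernel \<alpha> \<omega> z)"
  have on_radius: "cnj \<omega> * (of_real t * w) = of_real (t * cmod w)" for t
    using cnj_sgn_mult_self[of w] by (simp add: \<omega>_def mult.left_commute)
  have "cmod (f w - f 0) \<le> Re (g w - g 0)"
  proof (rule norm_diff_le_by_majorant[where f' = "deriv f" and g' = g'])
    fix u assume "u \<in> closed_segment 0 w"
    then have u: "u \<in> disc" and "cmod u < 1" using seg by (auto simp: mem_disc_iff)
    show "(f has_field_derivative deriv f u) (at u)" by (rule holomorphic_on_disc_derivI[OF f u])
    have K: "(test_kernel (\<alpha> - 1) \<omega> has_field_derivative
        of_real (\<alpha> - 1) * cnj \<omega> * test_kernel \<alpha> \<omega> u) (at u)"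
      using has_field_derivative_test_kernel[OF \<omega> \<open>cmod u < 1\<close>, of "\<alpha> - 1"] by simp
    show "(g has_field_derivative g' u) (at u)"
      unfolding g_def g'_def by (rule DERIV_cmult[OF K, THEN DERIV_cong]) (use \<open>\<alpha> > 1\<close> in simp)
    obtain t where t: "0 \<le> t" "t \<le> 1" "u = of_real t * w"
      using \<open>u \<in> closed_segment 0 w\<close> by (auto simp: closed_segment_def scaleR_conv_of_real)
    have tw: "0 \<le> t * cmod w" "t * cmod w < 1"
      using t w1 mult_left_le_one_le[of "cmod w" t] by auto
    have "cmod u = t * cmod w" using t by (simp add: norm_mult)
    then have "cmod (deriv f u) \<le> s * (1 - t * cmod w) powr (- \<alpha>)"
      using bloch_deriv_le_one_minus_norm_powr[OF bound[OF u] _ u] \<open>\<alpha> > 1\<close> by simp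
    moreover have "g' u * (w - 0) = of_real (s * (1 - t * cmod w) powr (- \<alpha>) * cmod w)"
      using test_kernel_real[OF on_radius tw(2)] on_radius[of 1]
      by (simp add: g'_def t(3) mult_ac)
    ultimately show "cmod (deriv f u * (w - 0)) \<le> Re (g' u * (w - 0))"
      by (simp add: norm_mult mult_right_mono)
  qed
  also have "Re (g w - g 0) = s / (\<alpha> - 1) * ((1 - cmod w) powr (1 - \<alpha>) - 1)"
    using test_kernel_real[OF on_radius[of 1], of "\<alpha> - 1"] w1 by (simp add: g_def algebra_simps)
  also have "\<dots> \<le> s / (\<alpha> - 1) * (1 - cmod w) powr (1 - \<alpha>)"
    using \<open>s \<ge> 0\<close> \<open>\<alpha> > 1\<close> by (intro mult_left_mono) auto
  finally show ?thesis .
qed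

lemma bloch_growth:
  assumes "f holomorphic_on disc"
    and "\<And>x. x \<in> disc \<Longrightarrow> (1 - (cmod x)\<^sup>2) powr \<alpha> * cmod (deriv f x) \<le> s"
    and "\<alpha> > 1" and "s \<ge> 0" and w: "w \<in> disc"
  shows "cmod (f w) \<le> (cmod (f 0) + s * (2 powr (\<alpha> - 1) / (\<alpha> - 1))) * (1 - (cmod w)\<^sup>2) powr (1 - \<alpha>)"
proof -
  define P where "P = (1 - (cmod w)\<^sup>2) powr (1 - \<alpha>)"
  have w1: "cmod w < 1" and pos: "0 < 1 - (cmod w)\<^sup>2"
    using w by (auto simp: mem_disc_iff abs_square_less_1)
  have P1: "1 \<le> P"
    using powr_mono2'[of "1 - \<alpha>" "1 - (cmod w)\<^sup>2" 1] pos \<open>\<alpha> > 1\<close> by (simp add: P_def)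
  have "(2 * (1 - cmod w)) powr (1 - \<alpha>) \<le> P"
    unfolding P_def using one_minus_sq_le_twice_one_minus[of "cmod w"] w1 pos \<open>\<alpha> > 1\<close>
    by (intro powr_mono2') auto
  moreover have "(2 * (1 - cmod w)) powr (1 - \<alpha>) = 2 powr (1 - \<alpha>) * (1 - cmod w) powr (1 - \<alpha>)"
    by (rule powr_mult)
  ultimately have "2 powr (\<alpha> - 1) * (2 powr (1 - \<alpha>) * (1 - cmod w) powr (1 - \<alpha>)) \<le> 2 powr (\<alpha> - 1) * P"
    by simp
  then have radial: "(1 - cmod w) powr (1 - \<alpha>) \<le> 2 powr (\<alpha> - 1) * P"
    by (simp add: mult.assoc[symmetric] powr_add[symmetric])
  have "cmod (f w) \<le> cmod (f 0) + cmod (f w - f 0)"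
    by (metis add.commute diff_add_cancel norm_triangle_ineq)
  also have "\<dots> \<le> cmod (f 0) * P + s / (\<alpha> - 1) * (2 powr (\<alpha> - 1) * P)"
  proof (rule add_mono)
    show "cmod (f 0) \<le> cmod (f 0) * P" using P1 by (simp add: mult_le_cancel_left1)
    show "cmod (f w - f 0) \<le> s / (\<alpha> - 1) * (2 powr (\<alpha> - 1) * P)"
      using bloch_increment_growth[OF assms] mult_left_mono[OF radial, of "s / (\<alpha> - 1)"] assms(3,4)
      by (meson divide_nonneg_pos diff_gt_0_iff_gt order_trans)
  qed
  finally show ?thesis by (simp add: P_def algebra_simps)
qed

lemma cball_half_gap:
  assumes "w \<in> disc" and "x \<in> cball w ((1 - cmod w) / 2)"
  shows "x \<in> disc" and "(1 - cmod w) / 2 \<le> 1 - cmod x"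
proof -
  have "cmod x \<le> cmod w + (1 - cmod w) / 2"
    using assms(2) norm_triangle_ineq2[of x w] by (simp add: dist_norm norm_minus_commute field_simps)
  then show "(1 - cmod w) / 2 \<le> 1 - cmod x" by (simp add: field_simps)
  then show "x \<in> disc" using assms(1) by (simp add: mem_disc_iff field_simps)
qed

lemma bloch_deriv2_growth:
  assumes f: "f holomorphic_on disc"
    and bound: "\<And>x. x \<in> disc \<Longrightarrow> (1 - (cmod x)\<^sup>2) powr \<alpha> * cmod (deriv f x) \<le> s"
    and "\<alpha> > 0" and "s \<ge> 0" and w: "w \<in> disc"
  shows "cmod (deriv (deriv f) w) \<le> s * 4 powr (\<alpha> + 1) * (1 - (cmod w)\<^sup>2) powr (- \<alpha> - 1)"
proof -
  have w1: "cmod w < 1" and pos: "0 < 1 - (cmod w)\<^sup>2"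
    using w by (auto simp: mem_disc_iff abs_square_less_1)
  define r where "r = (1 - cmod w) / 2"
  have r0: "r > 0" using w1 by (simp add: r_def)
  note near = cball_half_gap[OF w, folded r_def]
  then have cball: "cball w r \<subseteq> disc" by blast
  have f': "deriv f holomorphic_on disc" by (rule holomorphic_deriv[OF f open_disc])
  have circle: "cmod (deriv f x) \<le> s * r powr (- \<alpha>)" if "cmod (w - x) = r" for x
  proof -
    have x: "x \<in> cball w r" using that by (simp add: dist_norm)
    have "cmod (deriv f x) \<le> s * (1 - cmod x) powr (- \<alpha>)"
      using bloch_deriv_le_one_minus_norm_powr[OF bound[OF near(1)[OF x]]] \<open>\<alpha> > 0\<close> near(1)[OF x]
      by simp
    also have "\<dots> \<le> s * r powr (- \<alpha>)"
      using near(2)[OF x] r0 \<open>\<alpha> > 0\<close> \<open>s \<ge> 0\<close> by (intro mult_left_mono powr_mono2') auto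
    finally show ?thesis .
  qed
  have "cmod ((deriv ^^ 1) (deriv f) w) \<le> fact 1 * (s * r powr (- \<alpha>)) / r ^ 1"
  proof (rule Cauchy_inequality[OF _ _ r0])
    show "deriv f holomorphic_on ball w r"
      using cball ball_subset_cball by (blast intro: holomorphic_on_subset[OF f'])
    show "continuous_on (cball w r) (deriv f)"
      using cball by (blast intro: continuous_on_subset[OF holomorphic_on_imp_continuous_on[OF f']])
  qed (use circle in blast)
  then have "cmod (deriv (deriv f) w) \<le> s * r powr (- \<alpha> - 1)"
    using r0 by (simp add: powr_diff)
  also have "r powr (- \<alpha> - 1) \<le> ((1 - (cmod w)\<^sup>2) / 4) powr (- \<alpha> - 1)"
    using one_minus_sq_le_twice_one_minus[of "cmod w"] w1 pos \<open>\<alpha> > 0\<close>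
    by (intro powr_mono2') (auto simp: r_def)
  also have "\<dots> = (1 - (cmod w)\<^sup>2) powr (- \<alpha> - 1) / 4 powr (- \<alpha> - 1)"
    using pos by (simp add: powr_divide)
  also have "\<dots> = 4 powr (\<alpha> + 1) * (1 - (cmod w)\<^sup>2) powr (- \<alpha> - 1)"
    using powr_minus[of 4 "\<alpha> + 1"] by (simp add: divide_inverse)
  finally show ?thesis using \<open>s \<ge> 0\<close> by (simp add: mult_left_mono mult.assoc)
qed

definition bloch_growth_const :: "real \<Rightarrow> real" where
  "bloch_growth_const \<alpha> = 1 + 2 powr (\<alpha> - 1) / (\<alpha> - 1)"

definition bloch_growth_bounds :: "real \<Rightarrow> real \<Rightarrow> (complex \<Rightarrow> complex) \<Rightarrow> bool" where
  "bloch_growth_bounds \<alpha> N f \<longleftrightarrow> (\<forall>w\<in>disc.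
     cmod (f w) \<le> bloch_growth_const \<alpha> * N * (1 - (cmod w)\<^sup>2) powr (1 - \<alpha>) \<and>
     cmod (deriv f w) \<le> N * (1 - (cmod w)\<^sup>2) powr (- \<alpha>) \<and>
     cmod (deriv (deriv f) w) \<le> 4 powr (\<alpha> + 1) * N * (1 - (cmod w)\<^sup>2) powr (- \<alpha> - 1))"

lemma bloch_growth_bounds_if_deriv_bound:
  assumes hol: "f holomorphic_on disc"
    and bound: "\<And>x. x \<in> disc \<Longrightarrow> (1 - (cmod x)\<^sup>2) powr \<alpha> * cmod (deriv f x) \<le> s"
    and "\<alpha> > 1" and "s \<ge> 0"
  shows "bloch_growth_bounds \<alpha> (cmod (f 0) + s) f"
  unfolding bloch_growth_bounds_def
proof (intro ballI conjI)
  fix w assume w: "w \<in> disc"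
  have pos: "0 < 1 - (cmod w)\<^sup>2" using w by (rule one_minus_sq_norm_pos)
  define K where "K = 2 powr (\<alpha> - 1) / (\<alpha> - 1)"
  have "0 \<le> K" using \<open>\<alpha> > 1\<close> by (simp add: K_def)
  then have "cmod (f 0) + s * K \<le> bloch_growth_const \<alpha> * (cmod (f 0) + s)"
    using \<open>s \<ge> 0\<close> unfolding bloch_growth_const_def K_def[symmetric] by (simp add: algebra_simps)
  then show "cmod (f w) \<le> bloch_growth_const \<alpha> * (cmod (f 0) + s) * (1 - (cmod w)\<^sup>2) powr (1 - \<alpha>)"
    using bloch_growth[OF hol bound \<open>\<alpha> > 1\<close> \<open>s \<ge> 0\<close> w]
    unfolding K_def by (meson order_trans mult_right_mono powr_ge_zero)
  have "(1 - (cmod w)\<^sup>2) powr \<alpha> * cmod (deriv f w) \<le> cmod (f 0) + s"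
    using bound[OF w] norm_ge_zero[of "f 0"] by linarith
  then show "cmod (deriv f w) \<le> (cmod (f 0) + s) * (1 - (cmod w)\<^sup>2) powr (- \<alpha>)"
    using pos by (simp add: powr_minus field_simps)
  have "s * 4 powr (\<alpha> + 1) \<le> 4 powr (\<alpha> + 1) * (cmod (f 0) + s)" by (simp add: algebra_simps)
  then show "cmod (deriv (deriv f) w) \<le> 4 powr (\<alpha> + 1) * (cmod (f 0) + s) * (1 - (cmod w)\<^sup>2) powr (- \<alpha> - 1)"
    using bloch_deriv2_growth[OF hol bound _ \<open>s \<ge> 0\<close> w] \<open>\<alpha> > 1\<close>
    by (meson order_trans mult_right_mono powr_ge_zero less_trans zero_less_one)
qed

lemma bloch_space_pointwise_bounds:
  assumes f: "f \<in> bloch_space \<alpha>" and "\<alpha> > 1"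
  obtains N where "bloch_norm \<alpha> f = ereal N" and "bloch_growth_bounds \<alpha> N f"
proof -
  define S where "S = bloch_seminorm \<alpha> f"
  have hol: "f holomorphic_on disc" and "S < \<infinity>" using f by (auto simp: bloch_space_def S_def)
  have upper: "ereal ((1 - (cmod x)\<^sup>2) powr \<alpha> * cmod (deriv f x)) \<le> S" if "x \<in> disc" for x
    unfolding S_def bloch_seminorm_def by (rule SUP_upper2[OF that]) simp
  then have "S \<ge> 0" using order_trans[OF _ upper[OF zero_in_disc]] by simp
  then obtain s where S: "S = ereal s" and "s \<ge> 0" using \<open>S < \<infinity>\<close> by (cases S) auto
  have bound: "(1 - (cmod x)\<^sup>2) powr \<alpha> * cmod (deriv f x) \<le> s" if "x \<in> disc" for x
    using upper[OF that] by (simp add: S)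
  show ?thesis
  proof
    show "bloch_norm \<alpha> f = ereal (cmod (f 0) + s)"
      by (simp add: bloch_norm_def S[unfolded S_def])
  qed (rule bloch_growth_bounds_if_deriv_bound[OF hol bound \<open>\<alpha> > 1\<close> \<open>s \<ge> 0\<close>])
qed

section \<open>Sufficiency\<close>

lemma sup_ratio_finite_pointwise:
  assumes "sup_ratio \<beta> \<gamma> \<phi> w < \<infinity>" and "\<phi> ` disc \<subseteq> disc"
  obtains M where "M \<ge> 0"
    and "\<And>z. z \<in> disc \<Longrightarrow> (1 - (cmod z)\<^sup>2) powr \<beta> * cmod (w z) \<le> M * (1 - (cmod (\<phi> z))\<^sup>2) powr \<gamma>"
proof -
  obtain M where M: "sup_ratio \<beta> \<gamma> \<phi> w = ereal M"
    using assms(1) sup_ratio_nonneg[of \<beta> \<gamma> \<phi> w] by (cases "sup_ratio \<beta> \<gamma> \<phi> w") auto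
  show ?thesis
  proof
    show "M \<ge> 0" using sup_ratio_nonneg[of \<beta> \<gamma> \<phi> w] by (simp add: M)
    fix z assume z: "z \<in> disc"
    have "ereal ((1 - (cmod z)\<^sup>2) powr \<beta> * cmod (w z) / (1 - (cmod (\<phi> z))\<^sup>2) powr \<gamma>) \<le> ereal M"
      unfolding M[symmetric] sup_ratio_def by (rule SUP_upper2[OF z]) simp
    moreover have "0 < (1 - (cmod (\<phi> z))\<^sup>2) powr \<gamma>"
      using one_minus_sq_norm_pos[of "\<phi> z"] assms(2) z by auto
    ultimately show "(1 - (cmod z)\<^sup>2) powr \<beta> * cmod (w z) \<le> M * (1 - (cmod (\<phi> z))\<^sup>2) powr \<gamma>"
      by (simp add: pos_divide_le_eq)
  qed
qed

lemma mult_le_by_powr_cancel: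
  fixes X Y M K A g :: real
  assumes "0 \<le> X" "X \<le> M * A powr g" "0 \<le> Y" "Y \<le> K * A powr (- g)" "A > 0" "M \<ge> 0"
  shows "X * Y \<le> M * K"
proof -
  have "X * Y \<le> (M * A powr g) * (K * A powr (- g))"
    using assms by (intro mult_mono) auto
  also have "\<dots> = M * K" using assms(5) by (simp add: powr_minus field_simps)
  finally show ?thesis .
qed

lemma wco_at_0_le:
  assumes u: "u holomorphic_on disc" and \<phi>: "self_map \<phi>"
    and f: "f holomorphic_on disc" and G: "bloch_growth_bounds \<alpha> N f"
  shows "cmod (wco u \<phi> f 0) + cmod (deriv (wco u \<phi> f) 0)
    \<le> ((cmod (u 0) + cmod (deriv u 0)) * bloch_growth_const \<alpha> * (1 - (cmod (\<phi> 0))\<^sup>2) powr (1 - \<alpha>)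
        + cmod (u 0) * cmod (deriv \<phi> 0) * (1 - (cmod (\<phi> 0))\<^sup>2) powr (- \<alpha>)) * N"
proof -
  have "\<phi> 0 \<in> disc" using self_map_mem_disc[OF \<phi> zero_in_disc] .
  then have G0: "cmod (f (\<phi> 0)) \<le> bloch_growth_const \<alpha> * N * (1 - (cmod (\<phi> 0))\<^sup>2) powr (1 - \<alpha>)"
    and G1: "cmod (deriv f (\<phi> 0)) \<le> N * (1 - (cmod (\<phi> 0))\<^sup>2) powr (- \<alpha>)"
    using G by (auto simp: bloch_growth_bounds_def)
  have "cmod (wco u \<phi> f 0) + cmod (deriv (wco u \<phi> f) 0)
      \<le> cmod (u 0) * cmod (f (\<phi> 0)) + (cmod (deriv u 0) * cmod (f (\<phi> 0))
         + cmod (u 0) * cmod (deriv \<phi> 0) * cmod (deriv f (\<phi> 0)))"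
    unfolding deriv_wco[OF u f \<phi> zero_in_disc]
    by (intro add_mono order_trans[OF norm_triangle_ineq]) (simp_all add: wco_def norm_mult mult_ac)
  also have "\<dots> \<le> cmod (u 0) * (bloch_growth_const \<alpha> * N * (1 - (cmod (\<phi> 0))\<^sup>2) powr (1 - \<alpha>))
      + (cmod (deriv u 0) * (bloch_growth_const \<alpha> * N * (1 - (cmod (\<phi> 0))\<^sup>2) powr (1 - \<alpha>))
         + cmod (u 0) * cmod (deriv \<phi> 0) * (N * (1 - (cmod (\<phi> 0))\<^sup>2) powr (- \<alpha>)))"
    using G0 G1 by (intro add_mono mult_left_mono) auto
  finally show ?thesis by (simp add: algebra_simps)
qed

lemma wco_deriv2_weighted_le:
  assumes "\<alpha> > 1" and u: "u holomorphic_on disc" and \<phi>: "self_map \<phi>"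
    and "M1 \<ge> 0" "M2 \<ge> 0" "M3 \<ge> 0"
    and W1: "(1 - (cmod z)\<^sup>2) powr \<beta> * cmod (W1 u \<phi> z) \<le> M1 * (1 - (cmod (\<phi> z))\<^sup>2) powr \<alpha>"
    and W2: "(1 - (cmod z)\<^sup>2) powr \<beta> * cmod (W2 u \<phi> z) \<le> M2 * (1 - (cmod (\<phi> z))\<^sup>2) powr (\<alpha> + 1)"
    and W3: "(1 - (cmod z)\<^sup>2) powr \<beta> * cmod (W3 u z) \<le> M3 * (1 - (cmod (\<phi> z))\<^sup>2) powr (\<alpha> - 1)"
    and f: "f holomorphic_on disc" and G: "bloch_growth_bounds \<alpha> N f" and z: "z \<in> disc"
  shows "(1 - (cmod z)\<^sup>2) powr \<beta> * cmod (deriv (deriv (wco u \<phi> f)) z)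
    \<le> (M3 * bloch_growth_const \<alpha> + M1 + M2 * 4 powr (\<alpha> + 1)) * N"
proof -
  define a where "a = \<phi> z"
  define A where "A = 1 - (cmod a)\<^sup>2"
  define V where "V = (1 - (cmod z)\<^sup>2) powr \<beta>"
  have "a \<in> disc" using self_map_mem_disc[OF \<phi> z] by (simp add: a_def)
  then have "A > 0" unfolding A_def by (rule one_minus_sq_norm_pos)
  have "V \<ge> 0" by (simp add: V_def)
  have G0: "cmod (f a) \<le> bloch_growth_const \<alpha> * N * A powr (- (\<alpha> - 1))"
    and G1: "cmod (deriv f a) \<le> N * A powr (- \<alpha>)"
    and G2: "cmod (deriv (deriv f) a) \<le> 4 powr (\<alpha> + 1) * N * A powr (- (\<alpha> + 1))"
    using G \<open>a \<in> disc\<close> by (auto simp: bloch_growth_bounds_def A_def minus_diff_eq)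
  \<comment> \<open>In each term the power of \<open>1 - |\<phi> z|\<^sup>2\<close> bounding the coefficient cancels the growth
    of the matching derivative of \<open>f\<close> at \<open>\<phi> z\<close>.\<close>
  have "V * cmod (deriv (deriv (wco u \<phi> f)) z)
      \<le> V * cmod (W3 u z) * cmod (f a) + V * cmod (W1 u \<phi> z) * cmod (deriv f a)
        + V * cmod (W2 u \<phi> z) * cmod (deriv (deriv f) a)"
    using mult_left_mono[OF norm_deriv_deriv_wco_le[OF u f \<phi> z] \<open>V \<ge> 0\<close>]
    by (simp add: a_def algebra_simps)
  also have "\<dots> \<le> M3 * (bloch_growth_const \<alpha> * N) + M1 * N + M2 * (4 powr (\<alpha> + 1) * N)"
  proof -
    have W1': "V * cmod (W1 u \<phi> z) \<le> M1 * A powr \<alpha>"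
      and W2': "V * cmod (W2 u \<phi> z) \<le> M2 * A powr (\<alpha> + 1)"
      and W3': "V * cmod (W3 u z) \<le> M3 * A powr (\<alpha> - 1)"
      using W1 W2 W3 by (simp_all add: V_def A_def a_def)
    show ?thesis
      using mult_le_by_powr_cancel[OF _ W3' _ G0 \<open>A > 0\<close> \<open>M3 \<ge> 0\<close>]
        mult_le_by_powr_cancel[OF _ W1' _ G1 \<open>A > 0\<close> \<open>M1 \<ge> 0\<close>]
        mult_le_by_powr_cancel[OF _ W2' _ G2 \<open>A > 0\<close> \<open>M2 \<ge> 0\<close>] \<open>V \<ge> 0\<close>
      by (intro add_mono) auto
  qed
  finally show ?thesis by (simp add: V_def algebra_simps)
qed

lemma bounded_wco_if_sup_ratio_finite:
  assumes "\<alpha> > 1" and u: "u holomorphic_on disc" and \<phi>: "self_map \<phi>"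
    and "sup_ratio \<beta> \<alpha> \<phi> (W1 u \<phi>) < \<infinity>"
    and "sup_ratio \<beta> (\<alpha> + 1) \<phi> (W2 u \<phi>) < \<infinity>"
    and "sup_ratio \<beta> (\<alpha> - 1) \<phi> (W3 u) < \<infinity>"
  shows "bounded_wco_bloch_zyg \<alpha> \<beta> u \<phi>"
proof -
  note image = self_map_image_disc[OF \<phi>]
  obtain M1 M2 M3 where M: "M1 \<ge> 0" "M2 \<ge> 0" "M3 \<ge> 0"
    and W: "\<And>z. z \<in> disc \<Longrightarrow> (1 - (cmod z)\<^sup>2) powr \<beta> * cmod (W1 u \<phi> z) \<le> M1 * (1 - (cmod (\<phi> z))\<^sup>2) powr \<alpha>"
      "\<And>z. z \<in> disc \<Longrightarrow> (1 - (cmod z)\<^sup>2) powr \<beta> * cmod (W2 u \<phi> z) \<le> M2 * (1 - (cmod (\<phi> z))\<^sup>2) powr (\<alpha> + 1)"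
      "\<And>z. z \<in> disc \<Longrightarrow> (1 - (cmod z)\<^sup>2) powr \<beta> * cmod (W3 u z) \<le> M3 * (1 - (cmod (\<phi> z))\<^sup>2) powr (\<alpha> - 1)"
    using sup_ratio_finite_pointwise[OF _ image] assms(4-6) by metis
  note deriv2 = wco_deriv2_weighted_le[OF \<open>\<alpha> > 1\<close> u \<phi> M W]
  define C2 where "C2 = M3 * bloch_growth_const \<alpha> + M1 + M2 * 4 powr (\<alpha> + 1)"
  define C0 where "C0 = (cmod (u 0) + cmod (deriv u 0)) * bloch_growth_const \<alpha> * (1 - (cmod (\<phi> 0))\<^sup>2) powr (1 - \<alpha>)
      + cmod (u 0) * cmod (deriv \<phi> 0) * (1 - (cmod (\<phi> 0))\<^sup>2) powr (- \<alpha>)"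
  show ?thesis unfolding bounded_wco_bloch_zyg_def
  proof (intro exI[of _ "C0 + C2"] ballI conjI)
    fix f assume "f \<in> bloch_space \<alpha>"
    then have f: "f holomorphic_on disc" by (simp add: bloch_space_def)
    obtain N where N: "bloch_norm \<alpha> f = ereal N" and G: "bloch_growth_bounds \<alpha> N f"
      using bloch_space_pointwise_bounds[OF \<open>f \<in> bloch_space \<alpha>\<close> \<open>\<alpha> > 1\<close>] by blast
    have seminorm: "zyg_seminorm \<beta> (wco u \<phi> f) \<le> ereal (C2 * N)"
      unfolding zyg_seminorm_def C2_def by (rule SUP_least) (simp add: deriv2[OF _ _ _ f G])
    then show "wco u \<phi> f \<in> zygmund_space \<beta>"
      unfolding zygmund_space_def using holomorphic_on_wco[OF u f \<phi>] by (auto intro: le_less_trans)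
    have "zyg_norm \<beta> (wco u \<phi> f) \<le> ereal (C0 * N) + ereal (C2 * N)"
      unfolding zyg_norm_def plus_ereal.simps(1)[symmetric] C0_def
      using wco_at_0_le[OF u \<phi> f G] by (intro add_mono seminorm) simp
    then show "zyg_norm \<beta> (wco u \<phi> f) \<le> ereal (C0 + C2) * bloch_norm \<alpha> f"
      by (simp add: N algebra_simps)
  qed
qed

section \<open>Necessity\<close>

lemma bounded_wco_weighted_deriv2_le:
  assumes "bounded_wco_bloch_zyg \<alpha> \<beta> u \<phi>"
  obtains D where "D \<ge> 0"
    and "\<And>f N z. f \<in> bloch_space \<alpha> \<Longrightarrow> bloch_norm \<alpha> f \<le> ereal N \<Longrightarrow> z \<in> disc \<Longrightarrow>
           (1 - (cmod z)\<^sup>2) powr \<beta> * cmod (deriv (deriv (wco u \<phi> f)) z) \<le> D * N"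
proof -
  obtain C where C: "\<And>f. f \<in> bloch_space \<alpha> \<Longrightarrow> zyg_norm \<beta> (wco u \<phi> f) \<le> ereal C * bloch_norm \<alpha> f"
    using assms unfolding bounded_wco_bloch_zyg_def by blast
  define D where "D = max C 0"
  have "D \<ge> 0" "C \<le> D" by (simp_all add: D_def)
  show ?thesis
  proof (rule that[OF \<open>D \<ge> 0\<close>])
    fix f N z assume f: "f \<in> bloch_space \<alpha>" and N: "bloch_norm \<alpha> f \<le> ereal N" and z: "z \<in> disc"
    have "bloch_norm \<alpha> f \<ge> 0"
      unfolding bloch_norm_def bloch_seminorm_def by (intro add_nonneg_nonneg SUP_upper2[OF zero_in_disc]) auto
    have "ereal ((1 - (cmod z)\<^sup>2) powr \<beta> * cmod (deriv (deriv (wco u \<phi> f)) z)) \<le> zyg_seminorm \<beta> (wco u \<phi> f)"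
      unfolding zyg_seminorm_def by (rule SUP_upper2[OF z]) simp
    also have "\<dots> \<le> zyg_norm \<beta> (wco u \<phi> f)"
      unfolding zyg_norm_def by (intro add_increasing) auto
    also have "\<dots> \<le> ereal C * bloch_norm \<alpha> f" by (rule C[OF f])
    also have "\<dots> \<le> ereal D * ereal N"
      using \<open>bloch_norm \<alpha> f \<ge> 0\<close> \<open>C \<le> D\<close> \<open>D \<ge> 0\<close>
      by (intro order_trans[OF ereal_mult_right_mono ereal_mult_left_mono[OF N]]) auto
    finally show "(1 - (cmod z)\<^sup>2) powr \<beta> * cmod (deriv (deriv (wco u \<phi> f)) z) \<le> D * N"
      by simp
  qed
qed

lemma bloch_space_polynomial_tests:
  assumes "\<alpha> \<ge> 0"
  shows "(\<lambda>w. 1) \<in> bloch_space \<alpha>" "bloch_norm \<alpha> (\<lambda>w. 1) \<le> ereal 1"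
    and "(\<lambda>w. w) \<in> bloch_space \<alpha>" "bloch_norm \<alpha> (\<lambda>w. w) \<le> ereal 1"
    and "(\<lambda>w. w\<^sup>2) \<in> bloch_space \<alpha>" "bloch_norm \<alpha> (\<lambda>w. w\<^sup>2) \<le> ereal 2"
proof -
  have weight: "(1 - (cmod x)\<^sup>2) powr \<alpha> \<le> 1" "cmod x \<le> 1" if "x \<in> disc" for x
    using that assms powr_mono2[of \<alpha> "1 - (cmod x)\<^sup>2" 1]
    by (auto simp: mem_disc_iff abs_square_le_1 less_imp_le)
  have weight': "(1 - (cmod x)\<^sup>2) powr \<alpha> * cmod x \<le> 1" if "x \<in> disc" for x
    using weight[OF that] by (intro mult_le_one) auto
  have "deriv (\<lambda>w::complex. w\<^sup>2) = (\<lambda>w. 2 * w)"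
    by (rule ext, rule DERIV_imp_deriv) (auto intro!: derivative_eq_intros)
  then have s2: "bloch_seminorm \<alpha> (\<lambda>w. w\<^sup>2) \<le> 2"
    unfolding bloch_seminorm_def using weight' by (intro SUP_least) (simp add: norm_mult)
  have s1: "bloch_seminorm \<alpha> (\<lambda>w. w) \<le> 1"
    unfolding bloch_seminorm_def using weight by (intro SUP_least) auto
  have s0: "bloch_seminorm \<alpha> (\<lambda>w. 1) \<le> 0"
    unfolding bloch_seminorm_def by (intro SUP_least) simp
  show "(\<lambda>w. 1) \<in> bloch_space \<alpha>" "(\<lambda>w. w) \<in> bloch_space \<alpha>" "(\<lambda>w. w\<^sup>2) \<in> bloch_space \<alpha>"
    using s0 s1 s2 unfolding bloch_space_def by (auto intro!: holomorphic_intros intro: le_less_trans)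
  show "bloch_norm \<alpha> (\<lambda>w. 1) \<le> ereal 1" "bloch_norm \<alpha> (\<lambda>w. w) \<le> ereal 1"
    "bloch_norm \<alpha> (\<lambda>w. w\<^sup>2) \<le> ereal 2"
    unfolding bloch_norm_def using s0 s1 s2 add_mono[OF order_refl s0, of "ereal 1"]
    by (simp_all add: one_ereal_def)
qed

lemma ratio_le_of_isolated_bounds:
  fixes X E E' :: real and a :: complex
  assumes "0 \<le> X" and a: "cmod a < 1" and "\<gamma> \<ge> 0"
    and isolated: "X * cmod a ^ k * (1 - (cmod a)\<^sup>2) powr (- \<gamma>) \<le> E" and plain: "X \<le> E'"
  shows "X / (1 - (cmod a)\<^sup>2) powr \<gamma> \<le> 2 ^ k * E + E' / (3 / 4) powr \<gamma>"
proof -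
  define A where "A = 1 - (cmod a)\<^sup>2"
  note isolated = isolated[folded A_def]
  have "0 \<le> X * cmod a ^ k * A powr (- \<gamma>)" using \<open>0 \<le> X\<close> by simp
  then have "E \<ge> 0" using isolated by linarith
  have "E' \<ge> 0" using plain \<open>0 \<le> X\<close> by simp
  show ?thesis
  proof (cases "cmod a \<ge> 1 / 2")
    case True
    have "X * (1 / 2) ^ k * A powr (- \<gamma>) \<le> X * cmod a ^ k * A powr (- \<gamma>)"
      using True \<open>0 \<le> X\<close> by (intro mult_right_mono mult_left_mono power_mono) auto
    then have "2 ^ k * (X * (1 / 2) ^ k * A powr (- \<gamma>)) \<le> 2 ^ k * E"
      using isolated by (intro mult_left_mono) auto
    moreover have "X / A powr \<gamma> = 2 ^ k * (X * (1 / 2) ^ k * A powr (- \<gamma>))"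
    proof -
      have "(2::real) ^ k * (1 / 2) ^ k = 1" by (simp add: power_one_over)
      have "X / A powr \<gamma> = X * A powr (- \<gamma>)" by (simp add: powr_minus divide_inverse)
      also have "\<dots> = (2 ^ k * (1 / 2) ^ k) * (X * A powr (- \<gamma>))"
        using \<open>2 ^ k * (1 / 2) ^ k = 1\<close> by simp
      also have "\<dots> = 2 ^ k * (X * (1 / 2) ^ k * A powr (- \<gamma>))" by (simp only: mult_ac)
      finally show ?thesis .
    qed
    ultimately show ?thesis using \<open>E' \<ge> 0\<close> by (simp add: A_def add_increasing2)
  next
    case False
    then have "3 / 4 \<le> A"
      using mult_mono[of "cmod a" "1/2" "cmod a" "1/2"] by (simp add: A_def power2_eq_square)
    then have "X / A powr \<gamma> \<le> X / (3 / 4) powr \<gamma>"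
      using \<open>0 \<le> X\<close> \<open>\<gamma> \<ge> 0\<close> by (intro divide_left_mono powr_mono2 mult_pos_pos) auto
    also have "\<dots> \<le> E' / (3 / 4) powr \<gamma>" using plain by (intro divide_right_mono) auto
    finally show ?thesis using \<open>E \<ge> 0\<close> by (simp add: A_def add_increasing)
  qed
qed

lemma sup_ratio_finite_if_isolated_bounds:
  assumes "\<phi> ` disc \<subseteq> disc" and "\<gamma> \<ge> 0"
    and "\<And>z. z \<in> disc \<Longrightarrow>
      (1 - (cmod z)\<^sup>2) powr \<beta> * cmod (w z) * cmod (\<phi> z) ^ k * (1 - (cmod (\<phi> z))\<^sup>2) powr (- \<gamma>) \<le> E"
    and "\<And>z. z \<in> disc \<Longrightarrow> (1 - (cmod z)\<^sup>2) powr \<beta> * cmod (w z) \<le> E'"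
  shows "sup_ratio \<beta> \<gamma> \<phi> w < \<infinity>"
proof -
  have "sup_ratio \<beta> \<gamma> \<phi> w \<le> ereal (2 ^ k * E + E' / (3 / 4) powr \<gamma>)"
    unfolding sup_ratio_def
  proof (rule SUP_least)
    fix z assume z: "z \<in> disc"
    then have "\<phi> z \<in> disc" using assms(1) by blast
    then have "cmod (\<phi> z) < 1" by (simp add: mem_disc_iff)
    then show "ereal ((1 - (cmod z)\<^sup>2) powr \<beta> * cmod (w z) / (1 - (cmod (\<phi> z))\<^sup>2) powr \<gamma>)
        \<le> ereal (2 ^ k * E + E' / (3 / 4) powr \<gamma>)"
      using ratio_le_of_isolated_bounds[OF _ _ assms(2) assms(3,4)[OF z]] by simp
  qed
  then show ?thesis by (rule le_less_trans) simp
qed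

lemma sum_coefficients_pochhammer:
  fixes c :: "nat \<Rightarrow> real"
  shows "(\<Sum>k\<le>2. c k * pochhammer (p + real k) 0) = c 0 + c 1 + c 2"
    and "(\<Sum>k\<le>2. c k * pochhammer (p + real k) 1) = c 0 * p + c 1 * (p + 1) + c 2 * (p + 2)"
    and "(\<Sum>k\<le>2. c k * pochhammer (p + real k) 2)
           = c 0 * p * (p + 1) + c 1 * (p + 1) * (p + 2) + c 2 * (p + 2) * (p + 3)"
  by (simp_all add: numeral_2_eq_2 pochhammer_Suc algebra_simps)

text \<open>\<open>wco_weight u \<phi> j z\<close> is the coefficient of \<open>f\<^sup>(\<^sup>j\<^sup>) (\<phi> z)\<close> in \<open>deriv (deriv (wco u \<phi> f)) z\<close>
  (see \<open>deriv_deriv_wco\<close>).\<close>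

definition wco_weight :: "(complex \<Rightarrow> complex) \<Rightarrow> (complex \<Rightarrow> complex) \<Rightarrow> nat \<Rightarrow> complex \<Rightarrow> complex" where
  "wco_weight u \<phi> j z = (if j = 0 then W3 u z else if j = 1 then W1 u \<phi> z else W2 u \<phi> z)"

context
  fixes \<alpha> \<beta> D :: real and u \<phi> :: "complex \<Rightarrow> complex"
  assumes \<alpha>: "\<alpha> > 1" and u: "u holomorphic_on disc" and \<phi>: "self_map \<phi>" and "D \<ge> 0"
    and test: "\<And>f N z. f \<in> bloch_space \<alpha> \<Longrightarrow> bloch_norm \<alpha> f \<le> ereal N \<Longrightarrow> z \<in> disc \<Longrightarrow>
                 (1 - (cmod z)\<^sup>2) powr \<beta> * cmod (deriv (deriv (wco u \<phi> f)) z) \<le> D * N"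
begin

lemma weighted_W3_le: "z \<in> disc \<Longrightarrow> (1 - (cmod z)\<^sup>2) powr \<beta> * cmod (W3 u z) \<le> D"
  using test[OF bloch_space_polynomial_tests(1,2)] deriv_deriv_wco[OF u _ \<phi>, of "\<lambda>w. 1"] \<alpha>
  by simp

lemma weighted_W1_le:
  assumes z: "z \<in> disc"
  shows "(1 - (cmod z)\<^sup>2) powr \<beta> * cmod (W1 u \<phi> z) \<le> 2 * D"
proof -
  define V where "V = (1 - (cmod z)\<^sup>2) powr \<beta>"
  have "cmod (\<phi> z) \<le> 1" using self_map_mem_disc[OF \<phi> z] by (simp add: mem_disc_iff)
  have "V * cmod (W3 u z * \<phi> z + W1 u \<phi> z) \<le> D"
    using test[OF bloch_space_polynomial_tests(3,4) z] deriv_deriv_wco[OF u _ \<phi> z, of "\<lambda>w. w"] \<alpha>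
    by (simp add: V_def)
  moreover have "cmod (W1 u \<phi> z) \<le> cmod (W3 u z * \<phi> z + W1 u \<phi> z) + cmod (W3 u z)"
    using norm_triangle_ineq4[of "W3 u z * \<phi> z + W1 u \<phi> z" "W3 u z * \<phi> z"]
      mult_left_le_one_le[of "cmod (W3 u z)" "cmod (\<phi> z)"] \<open>cmod (\<phi> z) \<le> 1\<close>
    by (simp add: norm_mult mult.commute)
  ultimately show ?thesis
    using weighted_W3_le[OF z] mult_left_mono[of _ _ V] by (fastforce simp: V_def distrib_left)
qed

lemma weighted_W2_le:
  assumes z: "z \<in> disc"
  shows "(1 - (cmod z)\<^sup>2) powr \<beta> * cmod (W2 u \<phi> z) \<le> 4 * D"
proof -
  define V where "V = (1 - (cmod z)\<^sup>2) powr \<beta>"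
  define a where "a = \<phi> z"
  have "cmod a \<le> 1" using self_map_mem_disc[OF \<phi> z] by (simp add: mem_disc_iff a_def)
  have d2: "deriv (\<lambda>w::complex. w\<^sup>2) = (\<lambda>w. 2 * w)" "deriv (\<lambda>w::complex. 2 * w) = (\<lambda>w. 2)"
    by (rule ext, rule DERIV_imp_deriv, auto intro!: derivative_eq_intros)+
  have "V * cmod (W3 u z * a\<^sup>2 + W1 u \<phi> z * (2 * a) + W2 u \<phi> z * 2) \<le> D * 2"
    using test[OF bloch_space_polynomial_tests(5,6) z] \<alpha>
      deriv_deriv_wco[OF u holomorphic_on_power[OF holomorphic_on_id] \<phi> z, of 2]
    by (simp add: V_def a_def d2 mult_ac)
  moreover have "2 * cmod (W2 u \<phi> z) \<le> cmod (W3 u z * a\<^sup>2 + W1 u \<phi> z * (2 * a) + W2 u \<phi> z * 2)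
      + cmod (W3 u z) + 2 * cmod (W1 u \<phi> z)"
  proof -
    have "cmod (W3 u z) * cmod a ^ 2 \<le> cmod (W3 u z)" and "cmod (W1 u \<phi> z) * cmod a \<le> cmod (W1 u \<phi> z)"
      using \<open>cmod a \<le> 1\<close> by (auto intro!: mult_right_le_one_le power_le_one)
    then have "cmod (W3 u z * a\<^sup>2) \<le> cmod (W3 u z)" and "cmod (W1 u \<phi> z * (2 * a)) \<le> 2 * cmod (W1 u \<phi> z)"
      by (simp_all add: norm_mult norm_power mult.commute)
    moreover have "cmod (W2 u \<phi> z * 2) \<le> cmod (W3 u z * a\<^sup>2 + W1 u \<phi> z * (2 * a) + W2 u \<phi> z * 2)
        + cmod (W3 u z * a\<^sup>2) + cmod (W1 u \<phi> z * (2 * a))"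
      by (smt (verit) add_diff_cancel_left' norm_triangle_ineq4 add.commute norm_triangle_ineq)
    moreover have "cmod (W2 u \<phi> z * 2) = 2 * cmod (W2 u \<phi> z)" by (simp add: norm_mult)
    ultimately show ?thesis by linarith
  qed
  ultimately have "V * (2 * cmod (W2 u \<phi> z)) \<le> D * 2 + V * cmod (W3 u z) + 2 * (V * cmod (W1 u \<phi> z))"
    using mult_left_mono[of _ _ V] by (fastforce simp: V_def algebra_simps)
  moreover have "V * (2 * cmod (W2 u \<phi> z)) = 2 * (V * cmod (W2 u \<phi> z))" by simp
  ultimately show ?thesis
    using weighted_W3_le[OF z] weighted_W1_le[OF z] \<open>D \<ge> 0\<close> unfolding V_def by linarith
qed

lemma weighted_test_fun_le:
  assumes z: "z \<in> disc"
  shows "(1 - (cmod z)\<^sup>2) powr \<beta> * cmod (W3 u z * test_fun (\<alpha> - 1) c (\<phi> z) (\<phi> z)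
      + W1 u \<phi> z * test_fun_deriv 1 (\<alpha> - 1) c (\<phi> z) (\<phi> z)
      + W2 u \<phi> z * test_fun_deriv 2 (\<alpha> - 1) c (\<phi> z) (\<phi> z)) \<le> D * test_fun_bound (\<alpha> - 1) c"
proof -
  have "\<phi> z \<in> disc" and a: "cmod (\<phi> z) < 1" using self_map_mem_disc[OF \<phi> z] by (auto simp: mem_disc_iff)
  have "test_fun (\<alpha> - 1) c (\<phi> z) \<in> bloch_space \<alpha>"
    and "bloch_norm \<alpha> (test_fun (\<alpha> - 1) c (\<phi> z)) \<le> ereal (test_fun_bound (\<alpha> - 1) c)"
    using test_fun_in_bloch_space[of "\<alpha> - 1" "\<phi> z" c] \<alpha> a by simp_all
  from test[OF this z] show ?thesis
    using a
      deriv_deriv_wco[OF u holomorphic_on_test_fun_deriv[OF less_imp_le[OF a], of 0 "\<alpha> - 1" c] \<phi> z]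
      deriv_test_fun[OF _ \<open>\<phi> z \<in> disc\<close>, of "\<phi> z" "\<alpha> - 1" c]
    by simp
qed

lemma weighted_isolated_le:
  assumes z: "z \<in> disc"
    and S: "\<And>j. j \<le> 2 \<Longrightarrow> (\<Sum>k\<le>2. c k * pochhammer (\<alpha> - 1 + real k) j) = (if j = i then 1 else 0)"
    and "i \<le> 2"
  shows "(1 - (cmod z)\<^sup>2) powr \<beta> * cmod (wco_weight u \<phi> i z)
      * cmod (\<phi> z) ^ i * (1 - (cmod (\<phi> z))\<^sup>2) powr (- (\<alpha> - 1 + i)) \<le> D * test_fun_bound (\<alpha> - 1) c"
proof -
  define a where "a = \<phi> z"
  define A where "A = 1 - (cmod a)\<^sup>2"
  have a: "cmod a < 1" using self_map_mem_disc[OF \<phi> z] by (simp add: a_def mem_disc_iff)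
  then have "A > 0" by (simp add: A_def abs_square_less_1)
  have diag: "test_fun_deriv j (\<alpha> - 1) c a a = cnj a ^ j * of_real (if j = i then A powr (- (\<alpha> - 1 + j)) else 0)"
    if "j \<le> 2" for j
  proof -
    have "(\<Sum>k\<le>2. c k * pochhammer (\<alpha> - 1 + real k) j) * A powr (- (\<alpha> - 1)) / A ^ j
        = (if j = i then A powr (- (\<alpha> - 1 + j)) else 0)"
      using powr_minus_divide_power[OF \<open>A > 0\<close>, of "\<alpha> - 1" j] S[OF that] by (cases "j = i") simp_all
    then show ?thesis by (simp only: test_fun_deriv_diagonal[OF a] A_def[symmetric])
  qed
  have "cmod (W3 u z * test_fun (\<alpha> - 1) c a a + W1 u \<phi> z * test_fun_deriv 1 (\<alpha> - 1) c a a
      + W2 u \<phi> z * test_fun_deriv 2 (\<alpha> - 1) c a a)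
      = cmod (wco_weight u \<phi> i z) * cmod a ^ i * A powr (- (\<alpha> - 1 + i))"
  proof -
    from \<open>i \<le> 2\<close> consider "i = 0" | "i = 1" | "i = 2" by linarith
    then show ?thesis
      using diag[of 0] diag[of 1] diag[of 2] by cases (simp_all add: wco_weight_def norm_mult norm_power)
  qed
  then show ?thesis using weighted_test_fun_le[OF z, of c] by (simp add: a_def A_def mult_ac)
qed

lemma sup_ratio_W3_finite: "sup_ratio \<beta> (\<alpha> - 1) \<phi> (W3 u) < \<infinity>"
proof -
  define p where "p = \<alpha> - 1"
  define c :: "nat \<Rightarrow> real"
    where "c k = (if k = 0 then 1 + (p\<^sup>2 + 3 * p) / 2 else if k = 1 then - (p\<^sup>2 + 2 * p) else (p\<^sup>2 + p) / 2)" for k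
  have "(\<Sum>k\<le>2. c k * pochhammer (\<alpha> - 1 + real k) j) = (if j = 0 then 1 else 0)" if "j \<le> 2" for j
    using that sum_coefficients_pochhammer[of c "\<alpha> - 1"] unfolding p_def[symmetric]
    by (auto simp: c_def le_Suc_eq numeral_2_eq_2 field_simps power2_eq_square)
  note isolated = weighted_isolated_le[OF _ this, unfolded wco_weight_def]
  show ?thesis
    using isolated weighted_W3_le \<alpha>
    by (intro sup_ratio_finite_if_isolated_bounds[OF self_map_image_disc[OF \<phi>], where k = 0]) auto
qed

lemma sup_ratio_W1_finite: "sup_ratio \<beta> \<alpha> \<phi> (W1 u \<phi>) < \<infinity>"
proof -
  define c :: "nat \<Rightarrow> real"
    where "c k = (if k = 0 then - (\<alpha> + 1) else if k = 1 then 2 * \<alpha> + 1 else - \<alpha>)" for k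
  have "(\<Sum>k\<le>2. c k * pochhammer (\<alpha> - 1 + real k) j) = (if j = 1 then 1 else 0)" if "j \<le> 2" for j
    using that sum_coefficients_pochhammer[of c "\<alpha> - 1"]
    by (auto simp: c_def le_Suc_eq numeral_2_eq_2 algebra_simps)
  note isolated = weighted_isolated_le[OF _ this, unfolded wco_weight_def]
  show ?thesis
    using isolated weighted_W1_le \<alpha>
    by (intro sup_ratio_finite_if_isolated_bounds[OF self_map_image_disc[OF \<phi>], where k = 1]) auto
qed

lemma sup_ratio_W2_finite: "sup_ratio \<beta> (\<alpha> + 1) \<phi> (W2 u \<phi>) < \<infinity>"
proof -
  define c :: "nat \<Rightarrow> real" where "c k = (if k = 1 then - 1 else 1 / 2)" for k
  have "(\<Sum>k\<le>2. c k * pochhammer (\<alpha> - 1 + real k) j) = (if j = 2 then 1 else 0)" if "j \<le> 2" for j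
    using that sum_coefficients_pochhammer[of c "\<alpha> - 1"]
    by (auto simp: c_def le_Suc_eq numeral_2_eq_2 pochhammer_Suc algebra_simps)
  note isolated = weighted_isolated_le[OF _ this, unfolded wco_weight_def]
  show ?thesis
    using isolated weighted_W2_le \<alpha>
    by (intro sup_ratio_finite_if_isolated_bounds[OF self_map_image_disc[OF \<phi>], where k = 2])
      (auto simp: algebra_simps)
qed

end

lemma sup_ratio_finite_if_bounded_wco:
  assumes "\<alpha> > 1" and "u holomorphic_on disc" and "self_map \<phi>" and "bounded_wco_bloch_zyg \<alpha> \<beta> u \<phi>"
  shows "sup_ratio \<beta> \<alpha> \<phi> (W1 u \<phi>) < \<infinity>"
    and "sup_ratio \<beta> (\<alpha> + 1) \<phi> (W2 u \<phi>) < \<infinity>"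
    and "sup_ratio \<beta> (\<alpha> - 1) \<phi> (W3 u) < \<infinity>"
proof -
  obtain D where "D \<ge> 0"
    and "\<And>f N z. f \<in> bloch_space \<alpha> \<Longrightarrow> bloch_norm \<alpha> f \<le> ereal N \<Longrightarrow> z \<in> disc \<Longrightarrow>
           (1 - (cmod z)\<^sup>2) powr \<beta> * cmod (deriv (deriv (wco u \<phi> f)) z) \<le> D * N"
    using bounded_wco_weighted_deriv2_le[OF assms(4)] by blast
  note test = assms(1-3) this
  show "sup_ratio \<beta> \<alpha> \<phi> (W1 u \<phi>) < \<infinity>" by (rule sup_ratio_W1_finite[OF test])
  show "sup_ratio \<beta> (\<alpha> + 1) \<phi> (W2 u \<phi>) < \<infinity>" by (rule sup_ratio_W2_finite[OF test])
  show "sup_ratio \<beta> (\<alpha> - 1) \<phi> (W3 u) < \<infinity>" by (rule sup_ratio_W3_finite[OF test])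
qed

theorem theorem3p3:
  fixes \<alpha> \<beta> :: real
  assumes "\<alpha> > 1" and "\<beta> > 0"
  shows "(\<exists>C::real. C > 0 \<and>
           (\<forall>u \<phi>. u holomorphic_on disc \<longrightarrow> self_map \<phi> \<longrightarrow>
              sup_ratio \<beta> \<alpha> \<phi> (W1 u \<phi>) \<le> ereal C * sup_power \<beta> \<alpha> \<phi> (W1 u \<phi>) \<and>
              sup_power \<beta> \<alpha> \<phi> (W1 u \<phi>) \<le> ereal C * sup_ratio \<beta> \<alpha> \<phi> (W1 u \<phi>) \<and>
              sup_ratio \<beta> (\<alpha> + 1) \<phi> (W2 u \<phi>) \<le> ereal C * sup_power \<beta> (\<alpha> + 1) \<phi> (W2 u \<phi>) \<and>
              sup_power \<beta> (\<alpha> + 1) \<phi> (W2 u \<phi>) \<le> ereal C * sup_ratio \<beta> (\<alpha> + 1) \<phi> (W2 u \<phi>) \<and>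
              sup_ratio \<beta> (\<alpha> - 1) \<phi> (W3 u) \<le> ereal C * sup_power \<beta> (\<alpha> - 1) \<phi> (W3 u) \<and>
              sup_power \<beta> (\<alpha> - 1) \<phi> (W3 u) \<le> ereal C * sup_ratio \<beta> (\<alpha> - 1) \<phi> (W3 u)))
       \<and> (\<forall>u \<phi>. u holomorphic_on disc \<longrightarrow> self_map \<phi> \<longrightarrow>
            (bounded_wco_bloch_zyg \<alpha> \<beta> u \<phi> \<longleftrightarrow>
               sup_ratio \<beta> \<alpha> \<phi> (W1 u \<phi>) < \<infinity> \<and> sup_power \<beta> \<alpha> \<phi> (W1 u \<phi>) < \<infinity> \<and>
               sup_ratio \<beta> (\<alpha> + 1) \<phi> (W2 u \<phi>) < \<infinity> \<and> sup_power \<beta> (\<alpha> + 1) \<phi> (W2 u \<phi>) < \<infinity> \<and>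
               sup_ratio \<beta> (\<alpha> - 1) \<phi> (W3 u) < \<infinity> \<and> sup_power \<beta> (\<alpha> - 1) \<phi> (W3 u) < \<infinity>))"
proof -
  define C where "C = ratio_power_const \<alpha> + ratio_power_const (\<alpha> + 1) + ratio_power_const (\<alpha> - 1)"
  have C: "C > 0" "ratio_power_const \<alpha> \<le> C" "ratio_power_const (\<alpha> + 1) \<le> C" "ratio_power_const (\<alpha> - 1) \<le> C"
    using ratio_power_const_pos[of \<alpha>] ratio_power_const_pos[of "\<alpha> + 1"] ratio_power_const_pos[of "\<alpha> - 1"]
    by (simp_all add: C_def)
  have \<gamma>: "\<alpha> > 0" "\<alpha> + 1 > 0" "\<alpha> - 1 > 0" using assms(1) by simp_all
  note comparable = sup_ratio_sup_power_comparable[OF _ self_map_image_disc]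
  note finite = sup_power_finite_if_sup_ratio_finite[OF _ self_map_image_disc]
  show ?thesis
  proof (intro conjI exI[of _ C] allI impI)
    fix u \<phi> assume u: "u holomorphic_on disc" and \<phi>: "self_map \<phi>"
    show "bounded_wco_bloch_zyg \<alpha> \<beta> u \<phi> \<longleftrightarrow>
        sup_ratio \<beta> \<alpha> \<phi> (W1 u \<phi>) < \<infinity> \<and> sup_power \<beta> \<alpha> \<phi> (W1 u \<phi>) < \<infinity> \<and>
        sup_ratio \<beta> (\<alpha> + 1) \<phi> (W2 u \<phi>) < \<infinity> \<and> sup_power \<beta> (\<alpha> + 1) \<phi> (W2 u \<phi>) < \<infinity> \<and>
        sup_ratio \<beta> (\<alpha> - 1) \<phi> (W3 u) < \<infinity> \<and> sup_power \<beta> (\<alpha> - 1) \<phi> (W3 u) < \<infinity>"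
      using sup_ratio_finite_if_bounded_wco[OF assms(1) u \<phi>] bounded_wco_if_sup_ratio_finite[OF assms(1) u \<phi>]
        finite[OF \<gamma>(1) \<phi>] finite[OF \<gamma>(2) \<phi>] finite[OF \<gamma>(3) \<phi>] by blast
  qed (fact C(1) | rule comparable[OF \<gamma>(1) _ C(2)] comparable[OF \<gamma>(2) _ C(3)] comparable[OF \<gamma>(3) _ C(4)],
       assumption)+
qed

end
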